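(* Let $p\in(0,1)$, let $X,\gamma$ satisfy the standing assumptions in the context, let $0\le x_0<\mathbb E[\gamma X]$, let $q=\inf\{\mathrm{VaR}_p(g(X)):g\in\mathcal G_{\rm ns}\}$, and let $g_X\in\mathcal G_{\rm ns}$ be a solution of the problem of minimizing $\mathrm{VaR}_p(g(X))$ over $g\in\mathcal G_{\rm ns}$. Assume $q>0$. Then: (i) $\mathbb E[\gamma g_X(X)]=x_0$; (ii) if $g\in\mathcal G_{\rm ns}$ has the form $g(X)=X\mathds 1_A+(X\wedge q)\mathds 1_{A^c}$ for some $A\in\mathcal F$ with $\mathbb P(A)=1-p$, then $g$ is a solution of the problem; (iii) $g_X(X)=X\mathds 1_A+(X\wedge q)\mathds 1_{A^c}$ a.s. for some $A\in\sigma(X)$ with $\mathbb P(A)=1-p$; (iv) the solutions of the problem of maximizing $\mathbb E[\gamma(X\mathds 1_A+(X\wedge q)\mathds 1_{A^c})]$ over $A\in\sigma(X)$ with $\mathbb P(A)=1-p$ are $A^*=\{U>p\}$ a.s., where $U$ is a uniform transform of $(X-q)\gamma$ on the probability space $(\Omega,\sigma(X),\mathbb P)$; (v) $g_X(X)=X\mathds 1_{A^*}+(X\wedge q)\mathds 1_{(A^* )^c}$ for some $A^*$ as in (iv).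
   Context: $(\Omega,\mathcal F,\mathbb P)$ is atomless. $\mathrm{VaR}_p(Y)=\inf\{x:\mathbb P(Y\le x)\ge p\}$. A uniform transform of a random variable $Y$ is a random variable $U$ uniform on $[0,1]$ with $F_Y^{-1}(U)=Y$ a.s., where $F_Y^{-1}(t)=\mathrm{VaR}_t(Y)$. Standing assumptions: $X\ge0$ is a random variable whose distribution has a positive density on its support; $\gamma:\mathbb R\to\mathbb R$ is continuous and strictly positive; $\gamma$ also denotes $\gamma(X)$; $\mathbb E[\gamma]=1$, $\mathbb E[\gamma X]<\infty$. With $\mathcal G_1$ the measurable functions $\mathbb R\to\mathbb R$, $\mathcal G_{\rm ns}=\{g\in\mathcal G_1:\mathbb E[\gamma g(X)]\ge x_0,\ 0\le g(X)\le X\}$. *)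

theory Defs
  imports "HOL-Probability.Probability"
begin

definition atomless :: "'a measure \<Rightarrow> bool" where
  "atomless M \<longleftrightarrow> (\<forall>A\<in>sets M. 0 < measure M A \<longrightarrow>
      (\<exists>B\<in>sets M. B \<subseteq> A \<and> 0 < measure M B \<and> measure M B < measure M A))"

definition VaR :: "'a measure \<Rightarrow> real \<Rightarrow> ('a \<Rightarrow> real) \<Rightarrow> real" where
  "VaR M p Y = Inf {x. measure M {\<omega>\<in>space M. Y \<omega> \<le> x} \<ge> p}"

text \<open>Uniform transform of Y: U uniform on [0,1] with F_Y^{-1}(U) = Y a.s.,
  where F_Y^{-1}(t) = VaR_t(Y).\<close>
definition uniform_transform :: "'a measure \<Rightarrow> ('a \<Rightarrow> real) \<Rightarrow> ('a \<Rightarrow> real) \<Rightarrow> bool" where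
  "uniform_transform M Y U \<longleftrightarrow> U \<in> borel_measurable M \<and>
     distr M lborel U = uniform_measure lborel {0..1} \<and>
     (AE \<omega> in M. VaR M (U \<omega>) Y = Y \<omega>)"

definition dist_support :: "'a measure \<Rightarrow> ('a \<Rightarrow> real) \<Rightarrow> real set" where
  "dist_support M X = {x. \<forall>e>0. 0 < measure M {\<omega>\<in>space M. X \<omega> \<in> ball x e}}"

definition Gns :: "'a measure \<Rightarrow> ('a \<Rightarrow> real) \<Rightarrow> (real \<Rightarrow> real) \<Rightarrow> real \<Rightarrow> (real \<Rightarrow> real) set" where
  "Gns M X \<gamma> x0 = {g. g \<in> borel_measurable borel \<and>
      integral\<^sup>L M (\<lambda>\<omega>. \<gamma> (X \<omega>) * g (X \<omega>)) \<ge> x0 \<and>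
      (AE \<omega> in M. 0 \<le> g (X \<omega>) \<and> g (X \<omega>) \<le> X \<omega>)}"

definition sigmaX :: "'a measure \<Rightarrow> ('a \<Rightarrow> real) \<Rightarrow> 'a measure" where
  "sigmaX M X = vimage_algebra (space M) X borel"

definition restrX :: "'a measure \<Rightarrow> ('a \<Rightarrow> real) \<Rightarrow> 'a measure" where
  "restrX M X = restr_to_subalg M (sigmaX M X)"

definition objA :: "'a measure \<Rightarrow> ('a \<Rightarrow> real) \<Rightarrow> (real \<Rightarrow> real) \<Rightarrow> real \<Rightarrow> 'a set \<Rightarrow> real" where
  "objA M X \<gamma> q A = integral\<^sup>L M (\<lambda>\<omega>. \<gamma> (X \<omega>) * (if \<omega> \<in> A then X \<omega> else min (X \<omega>) q))"

end

theory Submission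
  imports Defs
begin

(*
  Write Z = (X - q) \<gamma>(X) and c = VaR_p(Z).

  (i) If E[\<gamma> g_X(X)] > x0, lowering g_X by a small \<epsilon> on {g_X \<le> q} keeps it admissible
  (E[\<gamma>] = 1), while its p-quantile drops to q - \<epsilon>, contradicting the minimality of q.

  (ii) Such a g is at most q off A, so VaR_p(g(X)) \<le> q.  Conversely g(X) \<le> w < q forces
  X \<le> w, an event of probability < p because the identity is admissible and hence q \<le> VaR_p(X).

  (iii) Raising g_X to X on {g_X > q} and on a part of {g_X \<le> q} of the right mass (X has no
  atoms) gives a function of the form in (ii) that dominates g_X.  By the argument of (i) its
  \<gamma>-expectation is at most x0 = E[\<gamma> g_X(X)], so it agrees with g_X almost surely.

  (iv) The objective equals E[\<gamma> min(X, q)] + E[1_A Z^+].  Exchanging subsets of equal mass shows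
  that A is optimal iff {Z > c} \<subseteq> A \<subseteq> {Z \<ge> c} almost surely; here c \<ge> 0 since q \<le> VaR_p(X).
  These sets are exactly the sets {U > p} for uniform transforms U of Z on \<sigma>(X): one direction
  is monotonicity of VaR, the other ranks \<omega> lexicographically by Z and a tie-breaker that
  places A last.

  (v) By (i) and (iii) the set A of (iii) is optimal, so (iv) applies to it.
*)

section \<open>Distribution functions and Value-at-Risk\<close>

definition partial_cdf :: "'a measure \<Rightarrow> 'a set \<Rightarrow> ('a \<Rightarrow> real) \<Rightarrow> real \<Rightarrow> real" where
  "partial_cdf M E Y t = measure M {\<omega>\<in>space M. \<omega> \<in> E \<and> Y \<omega> \<le> t}"

context prob_space
begin

context
  fixes Y :: "'a \<Rightarrow> real"
  assumes Y_measurable[measurable]: "Y \<in> borel_measurable M"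
begin

interpretation D: real_distribution "distr M borel Y"
  by (rule real_distribution_distr) simp

lemma cdf_distr_borel: "cdf (distr M borel Y) = (\<lambda>w. prob {\<omega>\<in>space M. Y \<omega> \<le> w})"
  by (auto simp: cdf_def measure_distr intro!: arg_cong[where f=prob])

lemma prob_le_mono: "x \<le> y \<Longrightarrow> prob {\<omega>\<in>space M. Y \<omega> \<le> x} \<le> prob {\<omega>\<in>space M. Y \<omega> \<le> y}"
  by (intro finite_measure_mono) auto

lemma prob_le_at_top: "((\<lambda>w. prob {\<omega>\<in>space M. Y \<omega> \<le> w}) \<longlongrightarrow> 1) at_top"
  using D.cdf_lim_at_top_prob by (simp add: cdf_distr_borel)

lemma prob_le_at_bot: "((\<lambda>w. prob {\<omega>\<in>space M. Y \<omega> \<le> w}) \<longlongrightarrow> 0) at_bot"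
  using D.cdf_lim_at_bot by (simp add: cdf_distr_borel)

lemma prob_le_continuous_right: "continuous (at_right a) (\<lambda>w. prob {\<omega>\<in>space M. Y \<omega> \<le> w})"
  using D.cdf_is_right_cont by (simp add: cdf_distr_borel)

lemma prob_le_at_left:
  "((\<lambda>w. prob {\<omega>\<in>space M. Y \<omega> \<le> w}) \<longlongrightarrow> prob {\<omega>\<in>space M. Y \<omega> < a}) (at_left a)"
  using D.cdf_at_left[of a] by (simp add: cdf_distr_borel measure_distr vimage_def Int_def conj_commute)

lemma isCont_prob_le:
  "prob {\<omega>\<in>space M. Y \<omega> = a} = 0 \<Longrightarrow> isCont (\<lambda>w. prob {\<omega>\<in>space M. Y \<omega> \<le> w}) a"
  using D.isCont_cdf[of a] by (simp add: cdf_distr_borel measure_distr vimage_def Int_def conj_commute)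

lemma prob_less_le_bound:
  assumes "\<And>x. x < a \<Longrightarrow> prob {\<omega>\<in>space M. Y \<omega> \<le> x} \<le> t"
  shows "prob {\<omega>\<in>space M. Y \<omega> < a} \<le> t"
proof (rule tendsto_upperbound[OF prob_le_at_left])
  show "\<forall>\<^sub>F x in at_left a. prob {\<omega>\<in>space M. Y \<omega> \<le> x} \<le> t"
    unfolding eventually_at_left_field by (intro exI[of _ "a - 1"]) (auto intro: assms)
qed simp

lemma VaR_set_nonempty:
  assumes "t < 1"
  shows "\<exists>x. t \<le> prob {\<omega>\<in>space M. Y \<omega> \<le> x}"
proof -
  obtain x where "t < prob {\<omega>\<in>space M. Y \<omega> \<le> x}"
    using order_tendstoD(1)[OF prob_le_at_top assms] by (auto simp: eventually_at_top_linorder)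
  then show ?thesis by (auto intro: less_imp_le)
qed

lemma VaR_set_bdd_below:
  assumes "0 < t"
  shows "bdd_below {x. t \<le> prob {\<omega>\<in>space M. Y \<omega> \<le> x}}"
proof -
  obtain b where b: "\<And>w. w \<le> b \<Longrightarrow> prob {\<omega>\<in>space M. Y \<omega> \<le> w} < t"
    using order_tendstoD(2)[OF prob_le_at_bot assms] by (auto simp: eventually_at_bot_linorder)
  show ?thesis
    by (rule bdd_belowI[of _ b]) (use b in \<open>fastforce intro: less_imp_le simp: not_le[symmetric]\<close>)
qed

lemma VaR_le: "0 < t \<Longrightarrow> t \<le> prob {\<omega>\<in>space M. Y \<omega> \<le> w} \<Longrightarrow> VaR M t Y \<le> w"
  unfolding VaR_def by (intro cInf_lower VaR_set_bdd_below) auto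

lemma prob_le_less_of_less_VaR: "0 < t \<Longrightarrow> w < VaR M t Y \<Longrightarrow> prob {\<omega>\<in>space M. Y \<omega> \<le> w} < t"
  using VaR_le[of t w] by force

lemma prob_le_VaR:
  assumes "0 < t" "t < 1"
  shows "t \<le> prob {\<omega>\<in>space M. Y \<omega> \<le> VaR M t Y}"
proof (rule tendsto_lowerbound)
  let ?G = "\<lambda>w. prob {\<omega>\<in>space M. Y \<omega> \<le> w}"
  show "(?G \<longlongrightarrow> ?G (VaR M t Y)) (at_right (VaR M t Y))"
    using prob_le_continuous_right by (simp add: continuous_within)
  show "\<forall>\<^sub>F y in at_right (VaR M t Y). t \<le> ?G y"
    unfolding eventually_at_right_field
  proof (intro exI[of _ "VaR M t Y + 1"] conjI allI impI)
    fix y assume "VaR M t Y < y"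
    then obtain s where "t \<le> ?G s" "s < y"
      using cInf_lessD[of "{x. t \<le> ?G x}" y] VaR_set_nonempty[OF assms(2)] by (auto simp: VaR_def)
    then show "t \<le> ?G y" using prob_le_mono[of s y] by linarith
  qed simp
qed simp

lemma le_VaRI:
  assumes "0 < t" "t < 1" and "\<And>w. w < a \<Longrightarrow> prob {\<omega>\<in>space M. Y \<omega> \<le> w} < t"
  shows "a \<le> VaR M t Y"
  using prob_le_VaR[OF assms(1,2)] assms(3)[of "VaR M t Y"] by fastforce

lemma VaR_mono: "0 < s \<Longrightarrow> s \<le> t \<Longrightarrow> t < 1 \<Longrightarrow> VaR M s Y \<le> VaR M t Y"
  unfolding VaR_def
  by (intro cInf_superset_mono VaR_set_bdd_below) (auto dest: VaR_set_nonempty)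

lemma prob_less_VaR: "0 < t \<Longrightarrow> prob {\<omega>\<in>space M. Y \<omega> < VaR M t Y} \<le> t"
  using prob_less_le_bound prob_le_less_of_less_VaR by (meson less_imp_le)

context
  fixes E assumes E_events[measurable]: "E \<in> events"
begin

lemma partial_cdf_mono: "s \<le> t \<Longrightarrow> partial_cdf M E Y s \<le> partial_cdf M E Y t"
  unfolding partial_cdf_def by (intro finite_measure_mono) auto

lemma borel_measurable_partial_cdf[measurable]: "partial_cdf M E Y \<in> borel_measurable borel"
  by (intro borel_measurable_mono monoI partial_cdf_mono)

lemma partial_cdf_le_prob: "partial_cdf M E Y t \<le> prob E"
  unfolding partial_cdf_def by (intro finite_measure_mono) auto

lemma partial_cdf_le_prob_le: "partial_cdf M E Y t \<le> prob {\<omega>\<in>space M. Y \<omega> \<le> t}"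
  unfolding partial_cdf_def by (intro finite_measure_mono) auto

lemma partial_cdf_increment_le:
  assumes "s \<le> t"
  shows "partial_cdf M E Y t - partial_cdf M E Y s
    \<le> prob {\<omega>\<in>space M. Y \<omega> \<le> t} - prob {\<omega>\<in>space M. Y \<omega> \<le> s}"
proof -
  have "partial_cdf M E Y t - partial_cdf M E Y s
      = prob ({\<omega>\<in>space M. \<omega> \<in> E \<and> Y \<omega> \<le> t} - {\<omega>\<in>space M. \<omega> \<in> E \<and> Y \<omega> \<le> s})"
    unfolding partial_cdf_def using assms by (subst finite_measure_Diff) auto
  also have "\<dots> \<le> prob ({\<omega>\<in>space M. Y \<omega> \<le> t} - {\<omega>\<in>space M. Y \<omega> \<le> s})"
    by (intro finite_measure_mono) auto
  also have "\<dots> = prob {\<omega>\<in>space M. Y \<omega> \<le> t} - prob {\<omega>\<in>space M. Y \<omega> \<le> s}"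
    using assms by (subst finite_measure_Diff) auto
  finally show ?thesis .
qed

lemma partial_cdf_at_bot: "(partial_cdf M E Y \<longlongrightarrow> 0) at_bot"
proof (rule tendsto_sandwich[OF _ _ tendsto_const prob_le_at_bot])
  show "\<forall>\<^sub>F t in at_bot. 0 \<le> partial_cdf M E Y t"
    by (simp add: partial_cdf_def)
  show "\<forall>\<^sub>F t in at_bot. partial_cdf M E Y t \<le> prob {\<omega>\<in>space M. Y \<omega> \<le> t}"
    by (intro always_eventually allI partial_cdf_le_prob_le)
qed

lemma partial_cdf_at_top: "(partial_cdf M E Y \<longlongrightarrow> prob E) at_top"
proof (rule tendsto_sandwich[OF _ _ _ tendsto_const])
  let ?G = "\<lambda>t. prob {\<omega>\<in>space M. Y \<omega> \<le> t}"
  have "prob E - (1 - ?G t) \<le> partial_cdf M E Y t" for t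
  proof -
    have "prob E - partial_cdf M E Y t = prob (E - {\<omega>\<in>space M. \<omega> \<in> E \<and> Y \<omega> \<le> t})"
      unfolding partial_cdf_def by (subst finite_measure_Diff) auto
    also have "\<dots> \<le> prob (space M - {\<omega>\<in>space M. Y \<omega> \<le> t})"
      using sets.sets_into_space[OF E_events] by (intro finite_measure_mono) auto
    also have "\<dots> = 1 - ?G t"
      by (subst finite_measure_Diff) (auto simp: prob_space)
    finally show ?thesis by linarith
  qed
  then show "\<forall>\<^sub>F t in at_top. prob E - (1 - ?G t) \<le> partial_cdf M E Y t"
    by (intro always_eventually allI)
  show "\<forall>\<^sub>F t in at_top. partial_cdf M E Y t \<le> prob E"
    by (intro always_eventually allI partial_cdf_le_prob)
  show "((\<lambda>t. prob E - (1 - ?G t)) \<longlongrightarrow> prob E) at_top"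
    using tendsto_diff[OF tendsto_const[of "prob E"] tendsto_diff[OF tendsto_const[of 1] prob_le_at_top]]
    by simp
qed

context
  assumes Y_atomless: "\<And>a. prob {\<omega>\<in>space M. Y \<omega> = a} = 0"
begin

lemma isCont_partial_cdf: "isCont (partial_cdf M E Y) a"
proof -
  let ?G = "\<lambda>w. prob {\<omega>\<in>space M. Y \<omega> \<le> w}"
  have bound: "\<bar>partial_cdf M E Y x - partial_cdf M E Y a\<bar> \<le> \<bar>?G x - ?G a\<bar>" for x
  proof (cases "x \<le> a")
    case True
    then show ?thesis
      using partial_cdf_increment_le[OF True] partial_cdf_mono[OF True] prob_le_mono[OF True] by arith
  next
    case False
    then have "a \<le> x" by simp
    then show ?thesis
      using partial_cdf_increment_le partial_cdf_mono prob_le_mono by fastforce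
  qed
  have "((\<lambda>x. ?G x - ?G a) \<longlongrightarrow> 0) (at a)"
    using isCont_prob_le[OF Y_atomless] by (simp add: isCont_def LIM_zero_iff)
  then have "((\<lambda>x. \<bar>?G x - ?G a\<bar>) \<longlongrightarrow> 0) (at a)"
    by (rule tendsto_rabs_zero)
  then have "((\<lambda>x. partial_cdf M E Y x - partial_cdf M E Y a) \<longlongrightarrow> 0) (at a)"
    by (rule Lim_null_comparison[rotated]) (use bound in \<open>simp add: always_eventually\<close>)
  then show ?thesis by (simp add: isCont_def LIM_zero_iff)
qed

lemma exists_partial_cdf_eq:
  assumes "0 < m" "m < prob E"
  shows "\<exists>t. partial_cdf M E Y t = m"
proof -
  obtain a where a: "partial_cdf M E Y a < m"
    using order_tendstoD(2)[OF partial_cdf_at_bot assms(1)] by (auto simp: eventually_at_bot_linorder)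
  obtain b where b: "m < partial_cdf M E Y b"
    using order_tendstoD(1)[OF partial_cdf_at_top assms(2)] by (auto simp: eventually_at_top_linorder)
  have "a \<le> b"
    using partial_cdf_mono[of b a] a b by linarith
  then show ?thesis
    using IVT[of "partial_cdf M E Y" a m b] a b isCont_partial_cdf by auto
qed

lemma prob_partial_cdf_le_upper:
  assumes "0 \<le> s"
  shows "prob {\<omega>\<in>space M. \<omega> \<in> E \<and> partial_cdf M E Y (Y \<omega>) \<le> s} \<le> s"
proof (cases "prob E \<le> s")
  case True
  have "prob {\<omega>\<in>space M. \<omega> \<in> E \<and> partial_cdf M E Y (Y \<omega>) \<le> s} \<le> prob E"
    by (intro finite_measure_mono) auto
  then show ?thesis using True by linarith
next
  case False
  let ?R = "partial_cdf M E Y"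
  define D where "D = {k. ?R k \<le> s}"
  obtain b where b: "s < ?R b"
    using order_tendstoD(1)[OF partial_cdf_at_top, of s] False by (auto simp: eventually_at_top_linorder)
  have bdd: "bdd_above D"
  proof (rule bdd_aboveI)
    fix k assume "k \<in> D"
    show "k \<le> b"
    proof (rule ccontr)
      assume "\<not> k \<le> b"
      then have "?R b \<le> ?R k" using partial_cdf_mono by simp
      then show False using b \<open>k \<in> D\<close> by (simp add: D_def)
    qed
  qed
  show ?thesis
  proof (cases "D = {}")
    case True
    then have empty: "{\<omega>\<in>space M. \<omega> \<in> E \<and> ?R (Y \<omega>) \<le> s} = {}" by (auto simp: D_def)
    show ?thesis unfolding empty using assms by simp
  next
    case False
    have "continuous_on UNIV ?R"
      using isCont_partial_cdf by (simp add: continuous_at_imp_continuous_on)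
    then have "closed D" unfolding D_def by (intro closed_Collect_le continuous_intros)
    then have "?R (Sup D) \<le> s"
      using closed_contains_Sup[OF False bdd] by (simp add: D_def)
    moreover have "prob {\<omega>\<in>space M. \<omega> \<in> E \<and> ?R (Y \<omega>) \<le> s} \<le> ?R (Sup D)"
      unfolding partial_cdf_def[of M E Y "Sup D"] using cSup_upper[OF _ bdd]
      by (intro finite_measure_mono) (auto simp: D_def)
    ultimately show ?thesis by linarith
  qed
qed

lemma prob_partial_cdf_le_lower:
  assumes "0 \<le> s" "s \<le> prob E"
  shows "s \<le> prob {\<omega>\<in>space M. \<omega> \<in> E \<and> partial_cdf M E Y (Y \<omega>) \<le> s}"
proof -
  consider "s = 0" | "s = prob E" | "0 < s" "s < prob E" using assms by linarith
  then show ?thesis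
  proof cases
    case 2
    have "{\<omega>\<in>space M. \<omega> \<in> E \<and> partial_cdf M E Y (Y \<omega>) \<le> s} = E"
      using partial_cdf_le_prob 2 sets.sets_into_space[OF E_events] by auto
    then show ?thesis using 2 by simp
  next
    case 3
    obtain t where t: "partial_cdf M E Y t = s" using exists_partial_cdf_eq[OF 3] by auto
    then have "s = prob {\<omega>\<in>space M. \<omega> \<in> E \<and> Y \<omega> \<le> t}" by (simp add: partial_cdf_def)
    also have "\<dots> \<le> prob {\<omega>\<in>space M. \<omega> \<in> E \<and> partial_cdf M E Y (Y \<omega>) \<le> s}"
      using partial_cdf_mono t by (intro finite_measure_mono) auto
    finally show ?thesis .
  qed simp
qed

end

end

end

lemma AE_not_in_prob_0: "A \<in> events \<Longrightarrow> prob A = 0 \<Longrightarrow> AE \<omega> in M. \<omega> \<notin> A"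
  by (intro AE_not_in) (simp add: null_sets_def emeasure_eq_measure)

lemma AE_mem_if_subset_prob_eq:
  assumes "S \<in> events" "T \<in> events" "S \<subseteq> T" "prob S = prob T"
  shows "AE \<omega> in M. \<omega> \<in> T \<longrightarrow> \<omega> \<in> S"
proof -
  have "prob (T - S) = 0" using assms by (simp add: finite_measure_Diff)
  then show ?thesis
    using AE_not_in_prob_0[of "T - S"] assms(1,2) by (auto elim: eventually_mono)
qed

lemma prob_Diff_swap:
  "A \<in> events \<Longrightarrow> B \<in> events \<Longrightarrow> prob (A - B) = prob A - prob B + prob (B - A)"
  using finite_measure_Diff'[of A B] finite_measure_Diff'[of B A] by (simp add: Int_commute)

lemma exists_margin_prob_pos:
  fixes f :: "'a \<Rightarrow> real"
  assumes [measurable]: "A \<in> events" "f \<in> borel_measurable M"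
    and pos: "0 < prob (A \<inter> {\<omega>\<in>space M. c < f \<omega>})"
  obtains \<delta> where "0 < \<delta>" "0 < prob (A \<inter> {\<omega>\<in>space M. c + \<delta> < f \<omega>})"
proof (rule ccontr)
  define N where "N n = A \<inter> {\<omega>\<in>space M. c + inverse (Suc n) < f \<omega>}" for n :: nat
  assume "\<not> thesis"
  have "N n \<in> null_sets M" for n
  proof -
    have "\<not> 0 < prob (N n)"
      using that[of "inverse (Suc n)"] \<open>\<not> thesis\<close> by (auto simp: N_def)
    then have "prob (N n) = 0" using measure_nonneg[of M "N n"] by linarith
    then show ?thesis by (auto simp: N_def null_sets_def emeasure_eq_measure)
  qed
  then have "(\<Union>n. N n) \<in> null_sets M" by blast
  moreover have "(\<Union>n. N n) = A \<inter> {\<omega>\<in>space M. c < f \<omega>}"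
  proof (intro equalityI subsetI)
    fix \<omega> assume \<omega>: "\<omega> \<in> A \<inter> {\<omega>\<in>space M. c < f \<omega>}"
    then obtain n where "inverse (Suc n) < f \<omega> - c"
      using reals_Archimedean[of "f \<omega> - c"] by auto
    then have "\<omega> \<in> N n" using \<omega> by (auto simp: N_def)
    then show "\<omega> \<in> (\<Union>n. N n)" by blast
  next
    fix \<omega> assume "\<omega> \<in> (\<Union>n. N n)"
    then obtain n where "\<omega> \<in> N n" by blast
    then have \<omega>: "\<omega> \<in> A" "\<omega> \<in> space M" "c + inverse (real (Suc n)) < f \<omega>"
      unfolding N_def by blast+
    have "0 < inverse (real (Suc n))" by (intro positive_imp_inverse_positive) simp
    then have "c < f \<omega>" using \<omega>(3) by linarith
    then show "\<omega> \<in> A \<inter> {\<omega>\<in>space M. c < f \<omega>}" using \<omega> by blast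
  qed
  ultimately show False using pos by (simp add: null_sets_def emeasure_eq_measure)
qed

lemma integrable_scaled_indicator: "A \<in> events \<Longrightarrow> integrable M (\<lambda>\<omega>. a * indicator A \<omega> :: real)"
  by (intro integrable_const_bound[where B="\<bar>a\<bar>"]) (auto simp: indicator_def)

lemma AE_in_unit_if_uniform:
  fixes U :: "'a \<Rightarrow> real"
  assumes [measurable]: "U \<in> borel_measurable M"
    and distr_U: "distr M lborel U = uniform_measure lborel {0..1}"
  shows "AE \<omega> in M. 0 < U \<omega> \<and> U \<omega> < 1"
proof -
  let ?T = "{..0} \<union> {1..} :: real set"
  have "emeasure M {\<omega>\<in>space M. U \<omega> \<in> ?T} = emeasure (distr M lborel U) ?T"
    by (subst emeasure_distr) (auto intro!: arg_cong[where f="emeasure M"])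
  also have "\<dots> = emeasure lborel ({0..1} \<inter> ?T) / emeasure lborel {0..1::real}"
    by (simp add: distr_U)
  also have "{0..1} \<inter> ?T = {0, 1}" by auto
  finally have "emeasure M {\<omega>\<in>space M. U \<omega> \<in> ?T} = 0"
    by (simp add: emeasure_lborel_countable)
  then have "AE \<omega> in M. U \<omega> \<notin> ?T"
    by (subst AE_iff_measurable[OF _ refl]) auto
  then show ?thesis by (rule eventually_mono) auto
qed

end

lemma AE_eq_if_AE_le_integral_le:
  fixes f g :: "'a \<Rightarrow> real"
  assumes f: "integrable M f" and g: "integrable M g"
    and le: "AE x in M. f x \<le> g x" and "integral\<^sup>L M g \<le> integral\<^sup>L M f"
  shows "AE x in M. f x = g x"
proof -
  have nonneg: "AE x in M. 0 \<le> g x - f x" using le by eventually_elim simp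
  have "integral\<^sup>L M (\<lambda>x. g x - f x) \<le> 0" using f g assms(4) by simp
  moreover have "0 \<le> integral\<^sup>L M (\<lambda>x. g x - f x)" using nonneg by (rule integral_nonneg_AE)
  ultimately have "integral\<^sup>L M (\<lambda>x. g x - f x) = 0" by simp
  then have "AE x in M. g x - f x = 0"
    using integral_nonneg_eq_0_iff_AE[OF Bochner_Integration.integrable_diff[OF g f] nonneg] by simp
  then show ?thesis by eventually_elim simp
qed

lemma measure_point_eq_0_if_distributed:
  assumes "distributed M lborel X (\<lambda>x. ennreal (f x))"
  shows "measure M {\<omega>\<in>space M. X \<omega> = x} = 0"
proof -
  have "emeasure M (X -` {x} \<inter> space M) = (\<integral>\<^sup>+y. ennreal (f y) * indicator {x} y \<partial>lborel)"
    by (rule distributed_emeasure[OF assms]) simp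
  also have "\<dots> = (\<integral>\<^sup>+y. ennreal (f x) * indicator {x} y \<partial>lborel)"
    by (intro nn_integral_cong) (auto split: split_indicator)
  also have "\<dots> = 0" by simp
  finally show ?thesis by (simp add: measure_def vimage_def Int_def conj_commute)
qed

section \<open>Lexicographic rank\<close>

text \<open>The distributional transform of Z with the ties of Z broken by K rather than by an
  independent uniform variable, which need not exist on the \<sigma>-algebra generated by X.\<close>

definition lex_rank :: "'a measure \<Rightarrow> ('a \<Rightarrow> real) \<Rightarrow> ('a \<Rightarrow> real) \<Rightarrow> 'a \<Rightarrow> real" where
  "lex_rank M Z K \<omega> = measure M {\<omega>'\<in>space M. Z \<omega>' < Z \<omega> \<or> (Z \<omega>' = Z \<omega> \<and> K \<omega>' \<le> K \<omega>)}"

context prob_space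
begin

context
  fixes Z K :: "'a \<Rightarrow> real"
  assumes Z_measurable[measurable]: "Z \<in> borel_measurable M"
    and K_measurable[measurable]: "K \<in> borel_measurable M"
begin

lemma borel_measurable_lex_rank[measurable]: "lex_rank M Z K \<in> borel_measurable M"
proof -
  define Q where "Q = {x \<in> space ((borel \<Otimes>\<^sub>M borel) \<Otimes>\<^sub>M M).
    Z (snd x) < fst (fst x) \<or> (Z (snd x) = fst (fst x) \<and> K (snd x) \<le> snd (fst x))}"
  have "Q \<in> sets ((borel \<Otimes>\<^sub>M borel) \<Otimes>\<^sub>M M)" unfolding Q_def by measurable
  then have "(\<lambda>zk. emeasure M (Pair zk -` Q)) \<in> borel_measurable (borel \<Otimes>\<^sub>M borel)"
    by (rule measurable_emeasure_Pair)
  then have "(\<lambda>\<omega>. emeasure M (Pair (Z \<omega>, K \<omega>) -` Q)) \<in> borel_measurable M"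
    by (rule measurable_compose[rotated]) measurable
  then have "(\<lambda>\<omega>. enn2real (emeasure M (Pair (Z \<omega>, K \<omega>) -` Q))) \<in> borel_measurable M"
    by measurable
  moreover have "Pair (Z \<omega>, K \<omega>) -` Q = {\<omega>'\<in>space M. Z \<omega>' < Z \<omega> \<or> (Z \<omega>' = Z \<omega> \<and> K \<omega>' \<le> K \<omega>)}"
    for \<omega> by (auto simp: Q_def space_pair_measure)
  then have "lex_rank M Z K = (\<lambda>\<omega>. enn2real (emeasure M (Pair (Z \<omega>, K \<omega>) -` Q)))"
    by (simp add: fun_eq_iff lex_rank_def measure_def)
  ultimately show ?thesis by simp
qed

lemma lex_rank_split:
  "lex_rank M Z K \<omega> = prob {\<omega>'\<in>space M. Z \<omega>' < Z \<omega>}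
    + partial_cdf M {\<omega>'\<in>space M. Z \<omega>' = Z \<omega>} K (K \<omega>)"
proof -
  have "{\<omega>'\<in>space M. Z \<omega>' < Z \<omega> \<or> (Z \<omega>' = Z \<omega> \<and> K \<omega>' \<le> K \<omega>)}
     = {\<omega>'\<in>space M. Z \<omega>' < Z \<omega>} \<union> {\<omega>'\<in>space M. \<omega>' \<in> {\<omega>'\<in>space M. Z \<omega>' = Z \<omega>} \<and> K \<omega>' \<le> K \<omega>}"
    by auto
  then show ?thesis unfolding lex_rank_def partial_cdf_def
    by (simp only:) (subst finite_measure_Union, auto)
qed

lemma lex_rank_le: "lex_rank M Z K \<omega> \<le> prob {\<omega>'\<in>space M. Z \<omega>' \<le> Z \<omega>}"
  unfolding lex_rank_def by (intro finite_measure_mono) auto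

lemma lex_rank_ge: "prob {\<omega>'\<in>space M. Z \<omega>' < Z \<omega>} \<le> lex_rank M Z K \<omega>"
  unfolding lex_rank_def by (intro finite_measure_mono) auto

lemma lex_rank_less_if_less_VaR: "0 < a \<Longrightarrow> Z \<omega> < VaR M a Z \<Longrightarrow> lex_rank M Z K \<omega> < a"
  using lex_rank_le[of \<omega>] prob_le_less_of_less_VaR[OF Z_measurable] by fastforce

lemma lex_rank_ge_if_greater_VaR:
  assumes "0 < a" "a < 1" "VaR M a Z < Z \<omega>"
  shows "a \<le> lex_rank M Z K \<omega>"
proof -
  have "prob {\<omega>'\<in>space M. Z \<omega>' \<le> VaR M a Z} \<le> prob {\<omega>'\<in>space M. Z \<omega>' < Z \<omega>}"
    using assms(3) by (intro finite_measure_mono) auto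
  then show ?thesis using prob_le_VaR[OF Z_measurable assms(1,2)] lex_rank_ge[of \<omega>] by linarith
qed

context
  assumes K_atomless: "\<And>k. prob {\<omega>\<in>space M. K \<omega> = k} = 0"
begin

lemma lex_rank_level_set:
  assumes "0 < a" "a < 1"
  obtains S where "S \<in> events" "prob S = a"
    "\<And>\<omega>. \<omega> \<in> space M \<Longrightarrow> lex_rank M Z K \<omega> < a \<Longrightarrow> \<omega> \<in> S"
    "\<And>\<omega>. \<omega> \<in> S \<Longrightarrow> lex_rank M Z K \<omega> \<le> a"
proof -
  define z where "z = VaR M a Z"
  define L where "L = {\<omega>\<in>space M. Z \<omega> < z}"
  define E where "E = {\<omega>\<in>space M. Z \<omega> = z}"
  define F where "F = {\<omega>\<in>space M. \<omega> \<in> E \<and> partial_cdf M E K (K \<omega>) \<le> a - prob L}"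
  have [measurable]: "L \<in> events" "E \<in> events" unfolding L_def E_def by measurable
  then have [measurable]: "F \<in> events" unfolding F_def by measurable
  have "prob {\<omega>\<in>space M. Z \<omega> \<le> z} = prob L + prob E"
    unfolding L_def E_def by (subst finite_measure_Union[symmetric]) (auto intro!: arg_cong[where f=prob])
  then have "0 \<le> a - prob L" "a - prob L \<le> prob E"
    using prob_less_VaR[OF Z_measurable assms(1)] prob_le_VaR[OF Z_measurable assms]
    by (auto simp: L_def z_def)
  then have "prob F = a - prob L"
    unfolding F_def
    using prob_partial_cdf_le_upper[OF K_measurable _ K_atomless] prob_partial_cdf_le_lower[OF K_measurable _ K_atomless]
    by (intro antisym) auto
  have on_E: "lex_rank M Z K \<omega> = prob L + partial_cdf M E K (K \<omega>)" if "\<omega> \<in> E" for \<omega>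
    using lex_rank_split[of \<omega>] that by (simp add: L_def E_def)
  show ?thesis
  proof
    show "L \<union> F \<in> events" by simp
    show "prob (L \<union> F) = a"
      using \<open>prob F = a - prob L\<close> by (subst finite_measure_Union) (auto simp: L_def F_def E_def)
  next
    fix \<omega> assume \<omega>: "\<omega> \<in> space M" "lex_rank M Z K \<omega> < a"
    consider "Z \<omega> < z" | "Z \<omega> = z" | "z < Z \<omega>" by linarith
    then show "\<omega> \<in> L \<union> F"
    proof cases
      case 2
      then show ?thesis using on_E[of \<omega>] \<omega> by (simp add: E_def F_def)
    next
      case 3
      then show ?thesis using lex_rank_ge_if_greater_VaR[OF assms] \<omega>(2) by (force simp: z_def)
    qed (use \<omega>(1) in \<open>simp add: L_def\<close>)
  next
    fix \<omega> assume "\<omega> \<in> L \<union> F"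
    then show "lex_rank M Z K \<omega> \<le> a"
      using lex_rank_less_if_less_VaR[OF assms(1)] on_E by (auto simp: L_def F_def z_def less_imp_le)
  qed
qed

lemma prob_lex_rank_le:
  assumes "0 \<le> a" "a < 1"
  shows "prob {\<omega>\<in>space M. lex_rank M Z K \<omega> \<le> a} = a"
proof (rule antisym)
  show "prob {\<omega>\<in>space M. lex_rank M Z K \<omega> \<le> a} \<le> a"
  proof (rule dense_ge_bounded[OF assms(2)])
    fix w assume w: "a < w" "w < 1"
    obtain S where S: "S \<in> events" "prob S = w"
      "\<And>\<omega>. \<omega> \<in> space M \<Longrightarrow> lex_rank M Z K \<omega> < w \<Longrightarrow> \<omega> \<in> S"
      by (rule lex_rank_level_set[of w]) (use w assms(1) in auto)
    have "{\<omega>\<in>space M. lex_rank M Z K \<omega> \<le> a} \<subseteq> S"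
      using S(3) w by force
    then show "prob {\<omega>\<in>space M. lex_rank M Z K \<omega> \<le> a} \<le> w"
      using finite_measure_mono[OF _ S(1)] S(2) by simp
  qed
  show "a \<le> prob {\<omega>\<in>space M. lex_rank M Z K \<omega> \<le> a}"
  proof (cases "a = 0")
    case False
    obtain S where S: "S \<in> events" "prob S = a" "\<And>\<omega>. \<omega> \<in> S \<Longrightarrow> lex_rank M Z K \<omega> \<le> a"
      by (rule lex_rank_level_set[of a]) (use False assms in auto)
    then have "S \<subseteq> {\<omega>\<in>space M. lex_rank M Z K \<omega> \<le> a}"
      using sets.sets_into_space by blast
    then have "prob S \<le> prob {\<omega>\<in>space M. lex_rank M Z K \<omega> \<le> a}"
      by (intro finite_measure_mono) auto
    then show ?thesis using S(2) by simp
  qed simp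
qed

lemma distr_lex_rank: "distr M lborel (lex_rank M Z K) = uniform_measure lborel {0..1}"
proof -
  have "prob {\<omega>\<in>space M. lex_rank M Z K \<omega> \<le> t} = (t - 0) / (1 - 0)" if "0 \<le> t" "t \<le> 1" for t
  proof (cases "t < 1")
    case False
    have "lex_rank M Z K \<omega> \<le> t" for \<omega>
      using prob_le_1 False unfolding lex_rank_def by (meson not_less order_trans)
    then have "{\<omega>\<in>space M. lex_rank M Z K \<omega> \<le> t} = space M" by blast
    then show ?thesis using False that by (simp add: prob_space)
  qed (use prob_lex_rank_le that in simp)
  then have "distributed M lborel (lex_rank M Z K) (\<lambda>x. indicator {0..1} x / measure lborel {0..1::real})"
    by (intro uniform_distrI_borel_atLeastAtMost) auto
  moreover have "(\<lambda>x. ennreal (indicator {0..1} x)) = (\<lambda>x::real. indicator {0..1} x / (1::ennreal))"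
    by (auto simp: indicator_def fun_eq_iff)
  ultimately show ?thesis
    by (simp add: distributed_distr_eq_density uniform_measure_def)
qed

lemma AE_lex_rank_le_prob_le_imp:
  "AE \<omega> in M. lex_rank M Z K \<omega> \<le> prob {\<omega>'\<in>space M. Z \<omega>' \<le> r} \<longrightarrow> Z \<omega> \<le> r"
proof -
  let ?G = "prob {\<omega>'\<in>space M. Z \<omega>' \<le> r}"
  show ?thesis
  proof (cases "?G < 1")
    case True
    have "{\<omega>\<in>space M. Z \<omega> \<le> r} \<subseteq> {\<omega>\<in>space M. lex_rank M Z K \<omega> \<le> ?G}"
      by (auto intro: order_trans[OF lex_rank_le prob_le_mono[OF Z_measurable]])
    moreover have "prob {\<omega>\<in>space M. lex_rank M Z K \<omega> \<le> ?G} = ?G"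
      using True by (intro prob_lex_rank_le) auto
    ultimately have "AE \<omega> in M. \<omega> \<in> {\<omega>\<in>space M. lex_rank M Z K \<omega> \<le> ?G} \<longrightarrow> \<omega> \<in> {\<omega>\<in>space M. Z \<omega> \<le> r}"
      by (intro AE_mem_if_subset_prob_eq) auto
    with AE_space show ?thesis by eventually_elim auto
  next
    case False
    then have "?G = 1"
      using prob_le_1[of "{\<omega>\<in>space M. Z \<omega> \<le> r}"] by linarith
    then have "prob (space M - {\<omega>\<in>space M. Z \<omega> \<le> r}) = 0"
      by (subst prob_compl) auto
    then have "AE \<omega> in M. \<omega> \<notin> space M - {\<omega>\<in>space M. Z \<omega> \<le> r}"
      by (intro AE_not_in_prob_0) auto
    with AE_space show ?thesis by eventually_elim auto
  qed
qed

lemma AE_VaR_lex_rank: "AE \<omega> in M. VaR M (lex_rank M Z K \<omega>) Z = Z \<omega>"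
proof -
  let ?U = "lex_rank M Z K"
  have "AE \<omega> in M. \<forall>r::rat. ?U \<omega> \<le> prob {\<omega>'\<in>space M. Z \<omega>' \<le> of_rat r} \<longrightarrow> Z \<omega> \<le> of_rat r"
    using AE_lex_rank_le_prob_le_imp by (subst AE_all_countable) auto
  moreover have "AE \<omega> in M. 0 < ?U \<omega> \<and> ?U \<omega> < 1"
    by (rule AE_in_unit_if_uniform[OF _ distr_lex_rank]) measurable
  ultimately show ?thesis
  proof eventually_elim
    case (elim \<omega>)
    then have U: "0 < ?U \<omega>" "?U \<omega> < 1" by auto
    show "VaR M (?U \<omega>) Z = Z \<omega>"
    proof (rule antisym)
      show "VaR M (?U \<omega>) Z \<le> Z \<omega>"
        using VaR_le[OF Z_measurable U(1) lex_rank_le] .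
      show "Z \<omega> \<le> VaR M (?U \<omega>) Z"
      proof (rule ccontr)
        assume "\<not> Z \<omega> \<le> VaR M (?U \<omega>) Z"
        then obtain r :: rat where r: "VaR M (?U \<omega>) Z < of_rat r" "of_rat r < Z \<omega>"
          using of_rat_dense by (meson not_le)
        have "?U \<omega> \<le> prob {\<omega>'\<in>space M. Z \<omega>' \<le> VaR M (?U \<omega>) Z}"
          using prob_le_VaR[OF Z_measurable U] .
        also have "\<dots> \<le> prob {\<omega>'\<in>space M. Z \<omega>' \<le> of_rat r}"
          using prob_le_mono[OF Z_measurable] r(1) by simp
        finally show False using elim r(2) by auto
      qed
    qed
  qed
qed

lemma uniform_transform_lex_rank: "uniform_transform M Z (lex_rank M Z K)"
  unfolding uniform_transform_def using distr_lex_rank AE_VaR_lex_rank by simp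

lemma AE_mem_iff_lex_rank_greater:
  assumes p: "0 < p" "p < 1"
    and A[measurable]: "A \<in> events" and prob_A: "prob A = 1 - p"
    and above: "AE \<omega> in M. VaR M p Z < Z \<omega> \<longrightarrow> \<omega> \<in> A"
    and below: "AE \<omega> in M. \<omega> \<in> A \<longrightarrow> VaR M p Z \<le> Z \<omega>"
    and A_K: "\<And>\<omega>. \<omega> \<in> space M \<Longrightarrow> \<omega> \<in> A \<longleftrightarrow> k < K \<omega>"
  shows "AE \<omega> in M. \<omega> \<in> A \<longleftrightarrow> p < lex_rank M Z K \<omega>"
proof -
  let ?U = "lex_rank M Z K"
  define c where "c = VaR M p Z"
  define L where "L = {\<omega>\<in>space M. Z \<omega> < c}"
  define E where "E = {\<omega>\<in>space M. Z \<omega> = c}"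
  define N where "N = L \<union> (E - A)"
  have [measurable]: "L \<in> events" and E_events[measurable]: "E \<in> events"
    unfolding L_def E_def by measurable
  then have [measurable]: "N \<in> events"
    unfolding N_def by measurable
  have N_compl: "AE \<omega> in M. \<omega> \<in> N \<longleftrightarrow> \<omega> \<in> space M - A"
    using above below AE_space by eventually_elim (auto simp: N_def L_def E_def c_def)
  have prob_N: "prob N = p"
    using finite_measure_eq_AE[OF N_compl] prob_compl[OF A] prob_A by simp
  have E_A: "partial_cdf M E K k = prob (E - A)"
    unfolding partial_cdf_def using A_K by (intro arg_cong[where f=prob]) (auto simp: E_def not_less)
  have N_le: "?U \<omega> \<le> p" if "\<omega> \<in> N" for \<omega>
  proof (cases "\<omega> \<in> L")
    case True
    then show ?thesis using lex_rank_less_if_less_VaR[OF p(1)] by (force simp: L_def c_def)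
  next
    case False
    then have "\<omega> \<in> E - A" "\<omega> \<in> space M" using that by (auto simp: N_def E_def)
    then have "K \<omega> \<le> k" using A_K by (auto simp: not_less[symmetric])
    have "?U \<omega> = prob L + partial_cdf M E K (K \<omega>)"
      using lex_rank_split[of \<omega>] \<open>\<omega> \<in> E - A\<close> by (simp add: L_def E_def)
    also have "\<dots> \<le> prob L + prob (E - A)"
      using partial_cdf_mono[OF K_measurable E_events \<open>K \<omega> \<le> k\<close>] E_A by simp
    also have "\<dots> = prob N"
      unfolding N_def by (subst finite_measure_Union) (auto simp: L_def E_def)
    finally show ?thesis using prob_N by simp
  qed
  have "N \<subseteq> {\<omega>\<in>space M. ?U \<omega> \<le> p}"
    using N_le sets.sets_into_space[of N M] by auto
  then have "AE \<omega> in M. \<omega> \<in> {\<omega>\<in>space M. ?U \<omega> \<le> p} \<longrightarrow> \<omega> \<in> N"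
    using prob_N prob_lex_rank_le[of p] p by (intro AE_mem_if_subset_prob_eq) auto
  with N_compl AE_space show ?thesis
    by eventually_elim (use N_le in \<open>auto simp: not_le[symmetric]\<close>)
qed

end

end

end

section \<open>The \<sigma>-algebra generated by a random variable\<close>

locale real_random_variable = prob_space M for M :: "'a measure" +
  fixes X :: "'a \<Rightarrow> real"
  assumes X_measurable[measurable]: "X \<in> borel_measurable M"
begin

lemma subalgebra_sigmaX: "subalgebra M (sigmaX M X)"
  unfolding subalgebra_def sigmaX_def
  using sets_image_in_sets[where N=M and f=X and M=borel and X="space M"] by auto

lemma space_sigmaX[simp]: "space (sigmaX M X) = space M"
  by (simp add: sigmaX_def)

lemma sets_sigmaX: "A \<in> sets (sigmaX M X) \<longleftrightarrow> (\<exists>S\<in>sets borel. A = X -` S \<inter> space M)"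
  unfolding sigmaX_def by (subst sets_vimage_algebra2) auto

lemma X_measurable_sigmaX[measurable]: "X \<in> borel_measurable (sigmaX M X)"
  unfolding sigmaX_def by (rule measurable_vimage_algebra1) auto

lemma sigmaX_subset_events: "A \<in> sets (sigmaX M X) \<Longrightarrow> A \<in> events"
  using subalgebra_sigmaX by (auto simp: subalgebra_def)

lemma pred_X_in_sigmaX:
  assumes [measurable]: "Measurable.pred borel P"
  shows "{\<omega>\<in>space M. P (X \<omega>)} \<in> sets (sigmaX M X)"
proof -
  have "{\<omega>\<in>space (sigmaX M X). P (X \<omega>)} \<in> sets (sigmaX M X)" by measurable
  then show ?thesis by simp
qed

lemma space_restrX[simp]: "space (restrX M X) = space M"
  unfolding restrX_def by (simp add: space_restr_to_subalg)

lemma sets_restrX[measurable_cong]: "sets (restrX M X) = sets (sigmaX M X)"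
  unfolding restrX_def by (rule sets_restr_to_subalg[OF subalgebra_sigmaX])

lemma measurable_X_restrX[measurable]: "X \<in> borel_measurable (restrX M X)"
  using X_measurable_sigmaX by (simp add: measurable_cong_sets[OF sets_restrX])

lemma prob_space_restrX: "prob_space (restrX M X)"
  unfolding restrX_def by (rule prob_space_restr_to_subalg[OF subalgebra_sigmaX prob_space_axioms])

lemma measure_restrX: "A \<in> sets (sigmaX M X) \<Longrightarrow> measure (restrX M X) A = prob A"
  unfolding restrX_def measure_def by (simp add: emeasure_restr_to_subalg[OF subalgebra_sigmaX])

lemma VaR_restrX:
  assumes [measurable]: "Y \<in> borel_measurable (restrX M X)"
  shows "VaR (restrX M X) t Y = VaR M t Y"
proof -
  have "measure (restrX M X) {\<omega>\<in>space M. Y \<omega> \<le> x} = prob {\<omega>\<in>space M. Y \<omega> \<le> x}" for x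
  proof -
    have "{\<omega>\<in>space (restrX M X). Y \<omega> \<le> x} \<in> sets (restrX M X)" by measurable
    then show ?thesis by (simp add: measure_restrX sets_restrX)
  qed
  then show ?thesis unfolding VaR_def by simp
qed

lemma AE_restrX_imp: "AE \<omega> in restrX M X. P \<omega> \<Longrightarrow> AE \<omega> in M. P \<omega>"
  unfolding restrX_def by (rule AE_restr_to_subalg[OF subalgebra_sigmaX])

lemma AE_restrX:
  "AE \<omega> in M. P \<omega> \<Longrightarrow> Measurable.pred (restrX M X) P \<Longrightarrow> AE \<omega> in restrX M X. P \<omega>"
  unfolding restrX_def
  by (intro AE_restr_to_subalg2[OF subalgebra_sigmaX])
    (auto intro: measurable_in_subalg'[OF subalgebra_sigmaX])

lemma exists_sigmaX_subset_prob_eq: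
  assumes X_atomless: "\<And>x. prob {\<omega>\<in>space M. X \<omega> = x} = 0"
    and A: "A \<in> sets (sigmaX M X)" and m: "0 \<le> m" "m \<le> prob A"
  shows "\<exists>B\<in>sets (sigmaX M X). B \<subseteq> A \<and> prob B = m"
proof -
  consider "m = 0" | "m = prob A" | "0 < m" "m < prob A" using m by linarith
  then show ?thesis
  proof cases
    case 3
    have [measurable]: "A \<in> sets (sigmaX M X)" "A \<in> events" using A sigmaX_subset_events by auto
    obtain t where t: "partial_cdf M A X t = m"
      using exists_partial_cdf_eq[OF X_measurable _ X_atomless 3] by auto
    have "{\<omega>\<in>space (sigmaX M X). \<omega> \<in> A \<and> X \<omega> \<le> t} \<in> sets (sigmaX M X)"
      by measurable
    with t show ?thesis by (intro bexI[of _ "{\<omega>\<in>space M. \<omega> \<in> A \<and> X \<omega> \<le> t}"]) (auto simp: partial_cdf_def)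
  qed (use A in \<open>auto intro: bexI[of _ "{}"] bexI[of _ A]\<close>)
qed

end

section \<open>Minimising VaR under an expectation constraint\<close>

locale VaR_minimization = real_random_variable +
  fixes \<gamma> :: "real \<Rightarrow> real" and p x0 q :: real
  assumes p: "0 < p" "p < 1"
    and X_nonneg: "\<And>\<omega>. \<omega> \<in> space M \<Longrightarrow> 0 \<le> X \<omega>"
    and X_atomless: "\<And>x. prob {\<omega>\<in>space M. X \<omega> = x} = 0"
    and \<gamma>_continuous: "continuous_on UNIV \<gamma>"
    and \<gamma>_pos: "\<And>x. 0 < \<gamma> x"
    and integrable_\<gamma>: "integrable M (\<lambda>\<omega>. \<gamma> (X \<omega>))"
    and expectation_\<gamma>: "integral\<^sup>L M (\<lambda>\<omega>. \<gamma> (X \<omega>)) = 1"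
    and integrable_\<gamma>_X: "integrable M (\<lambda>\<omega>. \<gamma> (X \<omega>) * X \<omega>)"
    and x0_less: "x0 < integral\<^sup>L M (\<lambda>\<omega>. \<gamma> (X \<omega>) * X \<omega>)"
    and q_def: "q = Inf ((\<lambda>g. VaR M p (\<lambda>\<omega>. g (X \<omega>))) ` Gns M X \<gamma> x0)"
    and q_pos: "0 < q"
begin

lemma \<gamma>_measurable[measurable]: "\<gamma> \<in> borel_measurable borel"
  using borel_measurable_continuous_onI[OF \<gamma>_continuous] .

lemma integrable_\<gamma>_mult:
  assumes [measurable]: "g \<in> borel_measurable borel"
    and bounds: "AE \<omega> in M. 0 \<le> g (X \<omega>) \<and> g (X \<omega>) \<le> X \<omega>"
  shows "integrable M (\<lambda>\<omega>. \<gamma> (X \<omega>) * g (X \<omega>))"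
proof (rule Bochner_Integration.integrable_bound[OF integrable_\<gamma>_X])
  show "AE \<omega> in M. norm (\<gamma> (X \<omega>) * g (X \<omega>)) \<le> norm (\<gamma> (X \<omega>) * X \<omega>)"
    using bounds by eventually_elim (auto simp: abs_mult intro!: mult_left_mono less_imp_le[OF \<gamma>_pos])
qed measurable

lemma VaR_nonneg:
  assumes [measurable]: "g \<in> borel_measurable borel" and nonneg: "AE \<omega> in M. 0 \<le> g (X \<omega>)"
  shows "0 \<le> VaR M p (\<lambda>\<omega>. g (X \<omega>))"
proof (rule le_VaRI[OF _ p])
  fix w :: real assume "w < 0"
  then have "prob {\<omega>\<in>space M. g (X \<omega>) \<le> w} = prob {}"
    using nonneg by (intro finite_measure_eq_AE) (auto elim!: eventually_mono)
  then show "prob {\<omega>\<in>space M. g (X \<omega>) \<le> w} < p" using p by simp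
qed measurable

lemma q_le_VaR:
  assumes "g \<in> Gns M X \<gamma> x0"
  shows "q \<le> VaR M p (\<lambda>\<omega>. g (X \<omega>))"
  unfolding q_def
proof (rule cInf_lower)
  show "bdd_below ((\<lambda>g. VaR M p (\<lambda>\<omega>. g (X \<omega>))) ` Gns M X \<gamma> x0)"
    by (rule bdd_belowI2[of _ 0]) (auto simp: Gns_def intro!: VaR_nonneg elim!: eventually_mono)
qed (use assms in simp)

lemma id_in_Gns: "(\<lambda>x. x) \<in> Gns M X \<gamma> x0"
  using x0_less X_nonneg by (auto simp: Gns_def)

lemma prob_X_le_less_p: "w < q \<Longrightarrow> prob {\<omega>\<in>space M. X \<omega> \<le> w} < p"
  using prob_le_less_of_less_VaR[OF X_measurable p(1)] q_le_VaR[OF id_in_Gns] by force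

lemma prob_X_le_q: "prob {\<omega>\<in>space M. X \<omega> \<le> q} \<le> p"
proof -
  have "prob {\<omega>\<in>space M. X \<omega> < q} \<le> p"
    by (rule prob_less_le_bound[OF X_measurable]) (use prob_X_le_less_p in \<open>simp add: less_imp_le\<close>)
  moreover have "prob {\<omega>\<in>space M. X \<omega> \<le> q} = prob {\<omega>\<in>space M. X \<omega> < q} + prob {\<omega>\<in>space M. X \<omega> = q}"
    by (subst finite_measure_Union[symmetric]) (auto intro!: arg_cong[where f=prob])
  ultimately show ?thesis using X_atomless[of q] by simp
qed

lemma VaR_eq_q_if_truncated:
  assumes [measurable]: "g \<in> borel_measurable borel"
    and A: "A \<in> events" "prob A = 1 - p"
    and g_eq: "AE \<omega> in M. g (X \<omega>) = (if \<omega> \<in> A then X \<omega> else min (X \<omega>) q)"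
  shows "VaR M p (\<lambda>\<omega>. g (X \<omega>)) = q"
proof (rule antisym)
  have "p = prob (space M - A)" using A prob_compl by simp
  also have "\<dots> \<le> prob {\<omega>\<in>space M. g (X \<omega>) \<le> q}"
    using g_eq by (intro finite_measure_mono_AE) (auto elim!: eventually_mono)
  finally show "VaR M p (\<lambda>\<omega>. g (X \<omega>)) \<le> q"
    by (intro VaR_le) (use p in auto)
  show "q \<le> VaR M p (\<lambda>\<omega>. g (X \<omega>))"
  proof (rule le_VaRI[OF _ p])
    fix w assume "w < q"
    have "AE \<omega> in M. \<omega> \<in> {\<omega>\<in>space M. g (X \<omega>) \<le> w} \<longrightarrow> \<omega> \<in> {\<omega>\<in>space M. X \<omega> \<le> w}"
      using g_eq by eventually_elim (use \<open>w < q\<close> in \<open>auto simp: min_def split: if_splits\<close>)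
    then have "prob {\<omega>\<in>space M. g (X \<omega>) \<le> w} \<le> prob {\<omega>\<in>space M. X \<omega> \<le> w}"
      by (rule finite_measure_mono_AE) simp
    then show "prob {\<omega>\<in>space M. g (X \<omega>) \<le> w} < p" using prob_X_le_less_p[OF \<open>w < q\<close>] by simp
  qed measurable
qed

lemma expectation_le_x0_if_VaR_le_q:
  assumes [measurable]: "g \<in> borel_measurable borel"
    and bounds: "AE \<omega> in M. 0 \<le> g (X \<omega>) \<and> g (X \<omega>) \<le> X \<omega>"
    and VaR_g: "VaR M p (\<lambda>\<omega>. g (X \<omega>)) \<le> q"
  shows "integral\<^sup>L M (\<lambda>\<omega>. \<gamma> (X \<omega>) * g (X \<omega>)) \<le> x0"
proof (rule ccontr)
  define I where "I = integral\<^sup>L M (\<lambda>\<omega>. \<gamma> (X \<omega>) * g (X \<omega>))"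
  assume "\<not> I \<le> x0"
  define \<epsilon> where "\<epsilon> = min q (I - x0)"
  have \<epsilon>: "0 < \<epsilon>" "\<epsilon> \<le> q" "\<epsilon> \<le> I - x0"
    using q_pos \<open>\<not> I \<le> x0\<close> by (auto simp: \<epsilon>_def)
  define g' where "g' x = (if g x \<le> q then min (g x) (q - \<epsilon>) else g x)" for x
  have [measurable]: "g' \<in> borel_measurable borel" unfolding g'_def by measurable
  have bounds': "AE \<omega> in M. 0 \<le> g' (X \<omega>) \<and> g' (X \<omega>) \<le> X \<omega>"
    using bounds by eventually_elim (use \<epsilon> in \<open>auto simp: g'_def\<close>)
  have "I - \<epsilon> = integral\<^sup>L M (\<lambda>\<omega>. \<gamma> (X \<omega>) * g (X \<omega>) - \<epsilon> * \<gamma> (X \<omega>))"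
    using integrable_\<gamma>_mult[OF _ bounds] integrable_\<gamma> expectation_\<gamma> by (simp add: I_def)
  also have "\<dots> \<le> integral\<^sup>L M (\<lambda>\<omega>. \<gamma> (X \<omega>) * g' (X \<omega>))"
  proof (rule integral_mono)
    show "integrable M (\<lambda>\<omega>. \<gamma> (X \<omega>) * g (X \<omega>) - \<epsilon> * \<gamma> (X \<omega>))"
      using integrable_\<gamma>_mult[OF _ bounds] integrable_\<gamma> by simp
    show "integrable M (\<lambda>\<omega>. \<gamma> (X \<omega>) * g' (X \<omega>))"
      by (rule integrable_\<gamma>_mult[OF _ bounds']) simp
    show "\<gamma> (X \<omega>) * g (X \<omega>) - \<epsilon> * \<gamma> (X \<omega>) \<le> \<gamma> (X \<omega>) * g' (X \<omega>)" for \<omega>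
      using mult_left_mono[of "g (X \<omega>) - \<epsilon>" "g' (X \<omega>)" "\<gamma> (X \<omega>)"] \<gamma>_pos[of "X \<omega>"] \<epsilon>
      by (auto simp: g'_def algebra_simps)
  qed
  finally have "I - \<epsilon> \<le> integral\<^sup>L M (\<lambda>\<omega>. \<gamma> (X \<omega>) * g' (X \<omega>))" .
  then have "g' \<in> Gns M X \<gamma> x0"
    using bounds' \<epsilon> by (auto simp: Gns_def)
  then have "q \<le> VaR M p (\<lambda>\<omega>. g' (X \<omega>))" by (rule q_le_VaR)
  moreover have "VaR M p (\<lambda>\<omega>. g' (X \<omega>)) \<le> q - \<epsilon>"
  proof (rule VaR_le[OF _ p(1)])
    have "p \<le> prob {\<omega>\<in>space M. g (X \<omega>) \<le> VaR M p (\<lambda>\<omega>. g (X \<omega>))}"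
      by (rule prob_le_VaR) (use p in auto)
    also have "\<dots> \<le> prob {\<omega>\<in>space M. g' (X \<omega>) \<le> q - \<epsilon>}"
      using VaR_g by (intro finite_measure_mono) (auto simp: g'_def)
    finally show "p \<le> prob {\<omega>\<in>space M. g' (X \<omega>) \<le> q - \<epsilon>}" .
  qed measurable
  ultimately show False using \<epsilon> by simp
qed

definition excess :: "real \<Rightarrow> real" where
  "excess x = (x - q) * \<gamma> x"

definition gain :: "'a set \<Rightarrow> real" where
  "gain A = integral\<^sup>L M (\<lambda>\<omega>. indicator A \<omega> * max (excess (X \<omega>)) 0)"

abbreviation optimal :: "'a set \<Rightarrow> bool" where
  "optimal A \<equiv> \<forall>B\<in>sets (sigmaX M X). prob B = 1 - p \<longrightarrow> objA M X \<gamma> q B \<le> objA M X \<gamma> q A"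

lemma excess_measurable[measurable]: "excess \<in> borel_measurable borel"
  unfolding excess_def by measurable

lemma isCont_excess: "isCont excess x"
  using \<gamma>_continuous unfolding excess_def
  by (intro continuous_intros) (simp add: continuous_on_eq_continuous_at)

lemma excess_nonneg_iff: "0 \<le> excess x \<longleftrightarrow> q \<le> x"
  using \<gamma>_pos[of x] by (auto simp: excess_def zero_le_mult_iff)

lemma excess_pos_iff: "0 < excess x \<longleftrightarrow> q < x"
  using \<gamma>_pos[of x] by (auto simp: excess_def zero_less_mult_iff)

lemma max_excess_eq: "max (excess x) 0 = \<gamma> x * (x - min x q)"
  using \<gamma>_pos[of x] by (auto simp: excess_def max_def min_def mult_le_0_iff)

lemma integrable_gain:
  assumes [measurable]: "A \<in> events"
  shows "integrable M (\<lambda>\<omega>. indicator A \<omega> * max (excess (X \<omega>)) 0)"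
proof (rule Bochner_Integration.integrable_bound[OF integrable_\<gamma>_X])
  show "AE \<omega> in M. norm (indicator A \<omega> * max (excess (X \<omega>)) 0) \<le> norm (\<gamma> (X \<omega>) * X \<omega>)"
  proof (rule AE_I2)
    fix \<omega> assume "\<omega> \<in> space M"
    then have "0 \<le> X \<omega>" by (rule X_nonneg)
    then have "max (excess (X \<omega>)) 0 \<le> \<gamma> (X \<omega>) * X \<omega>"
      using \<gamma>_pos[of "X \<omega>"] q_pos by (auto simp: max_excess_eq min_def intro!: mult_left_mono)
    then show "norm (indicator A \<omega> * max (excess (X \<omega>)) 0) \<le> norm (\<gamma> (X \<omega>) * X \<omega>)"
      by (auto simp: indicator_def)
  qed
qed measurable

lemma integrable_truncated:
  assumes [measurable]: "A \<in> events"
  shows "integrable M (\<lambda>\<omega>. \<gamma> (X \<omega>) * (if \<omega> \<in> A then X \<omega> else min (X \<omega>) q))"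
proof (rule Bochner_Integration.integrable_bound[OF integrable_\<gamma>_X])
  show "AE \<omega> in M. norm (\<gamma> (X \<omega>) * (if \<omega> \<in> A then X \<omega> else min (X \<omega>) q)) \<le> norm (\<gamma> (X \<omega>) * X \<omega>)"
  proof (rule AE_I2)
    fix \<omega> assume "\<omega> \<in> space M"
    then have "0 \<le> X \<omega>" by (rule X_nonneg)
    then have "\<bar>if \<omega> \<in> A then X \<omega> else min (X \<omega>) q\<bar> \<le> \<bar>X \<omega>\<bar>" using q_pos by auto
    then show "norm (\<gamma> (X \<omega>) * (if \<omega> \<in> A then X \<omega> else min (X \<omega>) q)) \<le> norm (\<gamma> (X \<omega>) * X \<omega>)"
      unfolding real_norm_def abs_mult using \<gamma>_pos[of "X \<omega>"] by (simp add: mult_left_mono)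
  qed
qed measurable

lemma objA_eq_gain:
  assumes [measurable]: "A \<in> events"
  shows "objA M X \<gamma> q A = objA M X \<gamma> q {} + gain A"
proof -
  have "objA M X \<gamma> q A
      = integral\<^sup>L M (\<lambda>\<omega>. \<gamma> (X \<omega>) * min (X \<omega>) q + indicator A \<omega> * max (excess (X \<omega>)) 0)"
    unfolding objA_def by (intro Bochner_Integration.integral_cong) (auto simp: max_excess_eq algebra_simps)
  also have "\<dots> = objA M X \<gamma> q {} + gain A"
    using integrable_\<gamma>_mult[of "\<lambda>x. min x q"] integrable_gain[OF assms] X_nonneg q_pos
    by (subst Bochner_Integration.integral_add) (auto simp: objA_def gain_def intro!: AE_I2)
  finally show ?thesis .
qed

lemma gain_le:
  assumes [measurable]: "A \<in> events" and "\<And>\<omega>. \<omega> \<in> A \<Longrightarrow> max (excess (X \<omega>)) 0 \<le> a"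
  shows "gain A \<le> a * prob A"
proof -
  have "gain A \<le> integral\<^sup>L M (\<lambda>\<omega>. a * indicator A \<omega>)"
    unfolding gain_def using integrable_gain integrable_scaled_indicator assms(2)
    by (intro integral_mono) (auto simp: indicator_def)
  then show ?thesis by simp
qed

lemma gain_ge:
  assumes [measurable]: "A \<in> events" and "\<And>\<omega>. \<omega> \<in> A \<Longrightarrow> a \<le> max (excess (X \<omega>)) 0"
  shows "a * prob A \<le> gain A"
proof -
  have "integral\<^sup>L M (\<lambda>\<omega>. a * indicator A \<omega>) \<le> gain A"
    unfolding gain_def using integrable_gain integrable_scaled_indicator assms(2)
    by (intro integral_mono) (auto simp: indicator_def)
  then show ?thesis by simp
qed

lemma gain_exchange:
  assumes [measurable]: "A \<in> events" "S \<in> events" "T \<in> events" and "S \<subseteq> A" "T \<inter> A = {}"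
  shows "gain ((A - S) \<union> T) = gain A - gain S + gain T"
proof -
  have "gain ((A - S) \<union> T) = integral\<^sup>L M (\<lambda>\<omega>. indicator A \<omega> * max (excess (X \<omega>)) 0
      - indicator S \<omega> * max (excess (X \<omega>)) 0 + indicator T \<omega> * max (excess (X \<omega>)) 0)"
    unfolding gain_def using assms(4,5)
    by (intro Bochner_Integration.integral_cong) (auto simp: indicator_def)
  then show ?thesis
    using integrable_gain[of A] integrable_gain[of S] integrable_gain[of T] by (simp add: gain_def)
qed


lemma objA_le_x0:
  assumes "A \<in> sets (sigmaX M X)" "prob A = 1 - p"
  shows "objA M X \<gamma> q A \<le> x0"
proof -
  obtain S where [measurable]: "S \<in> sets borel" and A: "A = X -` S \<inter> space M"
    using assms(1) sets_sigmaX by auto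
  define g where "g x = (if x \<in> S then x else min x q)" for x
  have [measurable]: "g \<in> borel_measurable borel" unfolding g_def by measurable
  have "VaR M p (\<lambda>\<omega>. g (X \<omega>)) = q"
    using assms(2) by (intro VaR_eq_q_if_truncated) (auto simp: A g_def intro!: AE_I2)
  then have "integral\<^sup>L M (\<lambda>\<omega>. \<gamma> (X \<omega>) * g (X \<omega>)) \<le> x0"
    using X_nonneg q_pos by (intro expectation_le_x0_if_VaR_le_q) (auto simp: g_def intro!: AE_I2)
  moreover have "objA M X \<gamma> q A = integral\<^sup>L M (\<lambda>\<omega>. \<gamma> (X \<omega>) * g (X \<omega>))"
    unfolding objA_def A g_def by (intro Bochner_Integration.integral_cong) auto
  ultimately show ?thesis by simp
qed

lemma excess_quantile_nonneg: "0 \<le> VaR M p (\<lambda>\<omega>. excess (X \<omega>))"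
proof (rule le_VaRI[OF _ p])
  fix w :: real assume "w < 0"
  then have "w < excess q" by (simp add: excess_def)
  then have "\<forall>\<^sub>F x in at q. w < excess x"
    using isCont_excess[of q] by (intro order_tendstoD(1)) (auto simp: isCont_def)
  then obtain \<eta> where "0 < \<eta>" and \<eta>: "\<And>x. x \<noteq> q \<Longrightarrow> dist x q < \<eta> \<Longrightarrow> w < excess x"
    by (auto simp: eventually_at)
  have "X \<omega> \<le> q - \<eta>" if "excess (X \<omega>) \<le> w" for \<omega>
  proof -
    have "X \<omega> < q" using that \<open>w < 0\<close> excess_nonneg_iff[of "X \<omega>"] by linarith
    then show ?thesis using \<eta>[of "X \<omega>"] that by (force simp: dist_real_def)
  qed
  then have "prob {\<omega>\<in>space M. excess (X \<omega>) \<le> w} \<le> prob {\<omega>\<in>space M. X \<omega> \<le> q - \<eta>}"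
    by (intro finite_measure_mono) auto
  also have "\<dots> < p" using prob_X_le_less_p \<open>0 < \<eta>\<close> by simp
  finally show "prob {\<omega>\<in>space M. excess (X \<omega>) \<le> w} < p" .
qed measurable

lemma not_optimal_if_exchange:
  assumes A: "A \<in> sets (sigmaX M X)" "prob A = 1 - p"
    and S: "S \<in> sets (sigmaX M X)" "S \<subseteq> A" "0 < prob S"
      "\<And>\<omega>. \<omega> \<in> S \<Longrightarrow> max (excess (X \<omega>)) 0 \<le> a"
    and T: "T \<in> sets (sigmaX M X)" "T \<inter> A = {}" "0 < prob T"
      "\<And>\<omega>. \<omega> \<in> T \<Longrightarrow> b \<le> max (excess (X \<omega>)) 0"
    and "a < b"
  shows "\<not> optimal A"
proof
  assume opt: "optimal A"
  define m where "m = min (prob S) (prob T)"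
  have m: "0 < m" "m \<le> prob S" "m \<le> prob T" using S(3) T(3) by (auto simp: m_def)
  obtain S' where S': "S' \<in> sets (sigmaX M X)" "S' \<subseteq> S" "prob S' = m"
    using exists_sigmaX_subset_prob_eq[OF X_atomless S(1), of m] m by auto
  obtain T' where T': "T' \<in> sets (sigmaX M X)" "T' \<subseteq> T" "prob T' = m"
    using exists_sigmaX_subset_prob_eq[OF X_atomless T(1), of m] m by auto
  have [measurable]: "A \<in> events" "S' \<in> events" "T' \<in> events"
    using A S' T' sigmaX_subset_events by auto
  have "S' \<subseteq> A" "T' \<inter> A = {}" using S'(2) S(2) T'(2) T(2) by auto
  define B where "B = (A - S') \<union> T'"
  have B: "B \<in> sets (sigmaX M X)"
    using A(1) S'(1) T'(1) by (simp add: B_def sets.Un sets.Diff)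
  have "prob B = prob (A - S') + prob T'"
    unfolding B_def by (rule finite_measure_Union) (use \<open>T' \<inter> A = {}\<close> in auto)
  also have "prob (A - S') = prob A - prob S'"
    by (rule finite_measure_Diff) (use \<open>S' \<subseteq> A\<close> in auto)
  finally have prob_B: "prob B = 1 - p" using A(2) S'(3) T'(3) by simp
  have "gain S' \<le> a * m" using gain_le[of S' a] S' S(4) by auto
  moreover have "b * m \<le> gain T'" using gain_ge[of T' b] T' T(4) by auto
  moreover have "a * m < b * m" using \<open>a < b\<close> m(1) by simp
  moreover have "gain B = gain A - gain S' + gain T'"
    unfolding B_def by (rule gain_exchange) (use \<open>S' \<subseteq> A\<close> \<open>T' \<inter> A = {}\<close> in auto)
  moreover have "objA M X \<gamma> q B \<le> objA M X \<gamma> q A" using opt B prob_B by blast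
  moreover have "B \<in> events" using B sigmaX_subset_events by blast
  ultimately show False
    using objA_eq_gain[of A] objA_eq_gain[of B] by simp
qed


lemma level_set_in_sigmaX:
  "{\<omega>\<in>space M. excess (X \<omega>) \<le> c} \<in> sets (sigmaX M X)"
  "{\<omega>\<in>space M. excess (X \<omega>) < c} \<in> sets (sigmaX M X)"
  "{\<omega>\<in>space M. c < excess (X \<omega>)} \<in> sets (sigmaX M X)"
  "{\<omega>\<in>space M. c \<le> excess (X \<omega>)} \<in> sets (sigmaX M X)"
  by (intro pred_X_in_sigmaX; measurable)+

lemma not_optimal_if_excluded_above_quantile:
  defines "c \<equiv> VaR M p (\<lambda>\<omega>. excess (X \<omega>))"
  assumes A: "A \<in> sets (sigmaX M X)" "prob A = 1 - p"
    and pos: "0 < prob ({\<omega>\<in>space M. c < excess (X \<omega>)} - A)"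
  shows "\<not> optimal A"
proof -
  define H where "H = {\<omega>\<in>space M. c < excess (X \<omega>)}"
  have A_events[measurable]: "A \<in> events" using A sigmaX_subset_events by blast
  have [measurable]: "H \<in> events" unfolding H_def by measurable
  have "H - A = (space M - A) \<inter> {\<omega>\<in>space M. c < excess (X \<omega>)}" by (auto simp: H_def)
  with pos have "0 < prob ((space M - A) \<inter> {\<omega>\<in>space M. c < excess (X \<omega>)})" by (simp add: H_def)
  then obtain \<delta> where "0 < \<delta>"
    and T_pos: "0 < prob ((space M - A) \<inter> {\<omega>\<in>space M. c + \<delta> < excess (X \<omega>)})"
    by (rule exists_margin_prob_pos[rotated 2]) auto
  have "space M - A \<in> sets (sigmaX M X)" using sets.compl_sets[OF A(1)] by simp
  then have T: "(space M - A) \<inter> {\<omega>\<in>space M. c + \<delta> < excess (X \<omega>)} \<in> sets (sigmaX M X)"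
    using level_set_in_sigmaX by blast
  have S: "A \<inter> {\<omega>\<in>space M. excess (X \<omega>) \<le> c} \<in> sets (sigmaX M X)"
    using A(1) level_set_in_sigmaX by blast
  have "H = space M - {\<omega>\<in>space M. excess (X \<omega>) \<le> c}" by (auto simp: H_def)
  then have "prob H \<le> 1 - p"
    using prob_le_VaR[OF _ p, of "\<lambda>\<omega>. excess (X \<omega>)"] by (simp add: prob_compl c_def)
  moreover have "A \<inter> {\<omega>\<in>space M. excess (X \<omega>) \<le> c} = A - H"
    using sets.sets_into_space[OF A_events] by (auto simp: H_def)
  ultimately have "0 < prob (A \<inter> {\<omega>\<in>space M. excess (X \<omega>) \<le> c})"
    using prob_Diff_swap[of A H] A(2) pos by (simp add: H_def)
  then show ?thesis
    using not_optimal_if_exchange[OF A S _ _ _ T _ T_pos, of c "c + \<delta>"] \<open>0 < \<delta>\<close>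
      excess_quantile_nonneg
    by (auto simp: c_def)
qed

lemma not_optimal_if_included_below_positive_quantile:
  defines "c \<equiv> VaR M p (\<lambda>\<omega>. excess (X \<omega>))"
  assumes A: "A \<in> sets (sigmaX M X)" "prob A = 1 - p" and "0 < c"
    and pos: "0 < prob (A \<inter> {\<omega>\<in>space M. excess (X \<omega>) < c})"
  shows "\<not> optimal A"
proof -
  define L where "L = {\<omega>\<in>space M. excess (X \<omega>) < c}"
  define G where "G = {\<omega>\<in>space M. c \<le> excess (X \<omega>)}"
  have A_events[measurable]: "A \<in> events" using A sigmaX_subset_events by blast
  have [measurable]: "L \<in> events" "G \<in> events" unfolding L_def G_def by measurable
  have "A \<inter> L = A \<inter> {\<omega>\<in>space M. - c < - excess (X \<omega>)}" by (auto simp: L_def)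
  with pos have "0 < prob (A \<inter> {\<omega>\<in>space M. - c < - excess (X \<omega>)})" by (simp add: L_def)
  then obtain \<delta> where "0 < \<delta>" and "0 < prob (A \<inter> {\<omega>\<in>space M. - c + \<delta> < - excess (X \<omega>)})"
    by (rule exists_margin_prob_pos[rotated 2]) auto
  moreover have "{\<omega>\<in>space M. - c + \<delta> < - excess (X \<omega>)} = {\<omega>\<in>space M. excess (X \<omega>) < c - \<delta>}"
    by auto
  ultimately have S_pos: "0 < prob (A \<inter> {\<omega>\<in>space M. excess (X \<omega>) < c - \<delta>})" by simp
  have S: "A \<inter> {\<omega>\<in>space M. excess (X \<omega>) < c - \<delta>} \<in> sets (sigmaX M X)"
    using A(1) level_set_in_sigmaX by blast
  have T: "G - A \<in> sets (sigmaX M X)"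
    using A(1) level_set_in_sigmaX by (auto simp: G_def)
  have "G = space M - L" by (auto simp: G_def L_def)
  moreover have "prob L \<le> p"
    using prob_less_VaR[OF _ p(1), of "\<lambda>\<omega>. excess (X \<omega>)"] by (simp add: L_def c_def)
  moreover have "A - G = A \<inter> L"
    using sets.sets_into_space[OF A_events] by (auto simp: G_def L_def)
  ultimately have "0 < prob (G - A)"
    using prob_Diff_swap[of G A] A(2) pos by (simp add: prob_compl L_def)
  moreover have "max (c - \<delta>) 0 < c" using \<open>0 < c\<close> \<open>0 < \<delta>\<close> by simp
  ultimately show ?thesis
    by (intro not_optimal_if_exchange[OF A S _ S_pos _ T, where a="max (c - \<delta>) 0" and b=c])
      (auto simp: G_def)
qed

lemma AE_above_quantile_if_optimal:
  assumes A: "A \<in> sets (sigmaX M X)" "prob A = 1 - p" and opt: "optimal A"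
  shows "AE \<omega> in M. VaR M p (\<lambda>\<omega>. excess (X \<omega>)) < excess (X \<omega>) \<longrightarrow> \<omega> \<in> A"
proof -
  define H where "H = {\<omega>\<in>space M. VaR M p (\<lambda>\<omega>. excess (X \<omega>)) < excess (X \<omega>)}"
  have [measurable]: "A \<in> events" using A sigmaX_subset_events by blast
  have [measurable]: "H \<in> events" unfolding H_def by measurable
  have "prob (H - A) = 0"
    using not_optimal_if_excluded_above_quantile[OF A] opt measure_nonneg[of M "H - A"]
    unfolding H_def by linarith
  then have "AE \<omega> in M. \<omega> \<notin> H - A" by (intro AE_not_in_prob_0) auto
  with AE_space show ?thesis by eventually_elim (auto simp: H_def)
qed

lemma prob_Diff_above_quantile_eq_0:
  assumes A: "A \<in> sets (sigmaX M X)" "prob A = 1 - p" and opt: "optimal A"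
    and c0: "VaR M p (\<lambda>\<omega>. excess (X \<omega>)) = 0"
  shows "prob (A - {\<omega>\<in>space M. 0 < excess (X \<omega>)}) = 0"
proof -
  define H where "H = {\<omega>\<in>space M. 0 < excess (X \<omega>)}"
  have [measurable]: "A \<in> events" using A sigmaX_subset_events by blast
  have [measurable]: "H \<in> events" unfolding H_def by measurable
  have "AE \<omega> in M. \<omega> \<in> H - A \<longleftrightarrow> \<omega> \<in> {}"
    using AE_above_quantile_if_optimal[OF A opt] unfolding c0 by eventually_elim (simp add: H_def)
  then have "prob (H - A) = 0"
    using finite_measure_eq_AE[of "H - A" "{}"] by simp
  have "H = space M - {\<omega>\<in>space M. X \<omega> \<le> q}"
    by (auto simp: H_def excess_pos_iff)
  then have "prob H = 1 - prob {\<omega>\<in>space M. X \<omega> \<le> q}"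
    using prob_compl[of "{\<omega>\<in>space M. X \<omega> \<le> q}"] by simp
  then have "prob (A - H) \<le> 0"
    using prob_Diff_swap[of A H] A(2) prob_X_le_q \<open>prob (H - A) = 0\<close> by simp
  then show ?thesis using measure_nonneg[of M "A - H"] unfolding H_def by linarith
qed

lemma AE_below_quantile_if_optimal:
  assumes A: "A \<in> sets (sigmaX M X)" "prob A = 1 - p" and opt: "optimal A"
  shows "AE \<omega> in M. \<omega> \<in> A \<longrightarrow> VaR M p (\<lambda>\<omega>. excess (X \<omega>)) \<le> excess (X \<omega>)"
proof -
  define c where "c = VaR M p (\<lambda>\<omega>. excess (X \<omega>))"
  define L where "L = {\<omega>\<in>space M. excess (X \<omega>) < c}"
  have [measurable]: "A \<in> events" using A sigmaX_subset_events by blast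
  have [measurable]: "L \<in> events" unfolding L_def by measurable
  have "prob (A \<inter> L) \<le> 0"
  proof (cases "c = 0")
    case True
    then have "prob (A \<inter> L) \<le> prob (A - {\<omega>\<in>space M. 0 < excess (X \<omega>)})"
      by (intro finite_measure_mono) (auto simp: L_def)
    then show ?thesis using prob_Diff_above_quantile_eq_0[OF A opt] True by (simp add: c_def)
  next
    case False
    then have "0 < c" using excess_quantile_nonneg by (simp add: c_def)
    then show ?thesis
      using not_optimal_if_included_below_positive_quantile[OF A] opt by (force simp: L_def c_def)
  qed
  then have "AE \<omega> in M. \<omega> \<notin> A \<inter> L"
    using measure_nonneg[of M "A \<inter> L"] by (intro AE_not_in_prob_0) auto
  with AE_space show ?thesis by eventually_elim (auto simp: L_def c_def not_less)
qed

lemma optimal_if_between_quantile: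
  assumes A: "A \<in> sets (sigmaX M X)" "prob A = 1 - p"
    and above: "AE \<omega> in M. VaR M p (\<lambda>\<omega>. excess (X \<omega>)) < excess (X \<omega>) \<longrightarrow> \<omega> \<in> A"
    and below: "AE \<omega> in M. \<omega> \<in> A \<longrightarrow> VaR M p (\<lambda>\<omega>. excess (X \<omega>)) \<le> excess (X \<omega>)"
  shows "optimal A"
proof (intro ballI impI)
  fix B assume B: "B \<in> sets (sigmaX M X)" "prob B = 1 - p"
  define c where "c = VaR M p (\<lambda>\<omega>. excess (X \<omega>))"
  have "0 \<le> c" using excess_quantile_nonneg by (simp add: c_def)
  have [measurable]: "A \<in> events" "B \<in> events" using A B sigmaX_subset_events by auto
  have "gain B \<le> integral\<^sup>L M (\<lambda>\<omega>. indicator A \<omega> * max (excess (X \<omega>)) 0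
      + (c * indicator B \<omega> - c * indicator A \<omega>))"
    unfolding gain_def
  proof (rule integral_mono_AE)
    show "integrable M (\<lambda>\<omega>. indicator A \<omega> * max (excess (X \<omega>)) 0
        + (c * indicator B \<omega> - c * indicator A \<omega>))"
      using integrable_gain[of A] integrable_scaled_indicator[of A c] integrable_scaled_indicator[of B c]
      by simp
    show "AE \<omega> in M. indicator B \<omega> * max (excess (X \<omega>)) 0 \<le> indicator A \<omega> * max (excess (X \<omega>)) 0
        + (c * indicator B \<omega> - c * indicator A \<omega>)"
      using above below by eventually_elim (use \<open>0 \<le> c\<close> in \<open>auto simp: c_def indicator_def\<close>)
  qed (simp add: integrable_gain)
  also have "\<dots> = gain A + c * prob B - c * prob A"
    using integrable_gain[of A] integrable_scaled_indicator[of A c] integrable_scaled_indicator[of B c]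
    by (simp add: gain_def)
  finally have "gain B \<le> gain A" using A(2) B(2) by simp
  then show "objA M X \<gamma> q B \<le> objA M X \<gamma> q A"
    using objA_eq_gain[of A] objA_eq_gain[of B] by simp
qed

lemma AE_between_quantile_if_uniform_transform:
  assumes U: "uniform_transform (restrX M X) (\<lambda>\<omega>. excess (X \<omega>)) U"
    and A_U: "AE \<omega> in M. \<omega> \<in> A \<longleftrightarrow> p < U \<omega>"
  shows "AE \<omega> in M. (VaR M p (\<lambda>\<omega>. excess (X \<omega>)) < excess (X \<omega>) \<longrightarrow> \<omega> \<in> A)
    \<and> (\<omega> \<in> A \<longrightarrow> VaR M p (\<lambda>\<omega>. excess (X \<omega>)) \<le> excess (X \<omega>))"
proof -
  interpret R: prob_space "restrX M X" by (rule prob_space_restrX)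
  have [measurable]: "U \<in> borel_measurable (restrX M X)"
    and distr_U: "distr (restrX M X) lborel U = uniform_measure lborel {0..1}"
    and VaR_U: "AE \<omega> in restrX M X. VaR (restrX M X) (U \<omega>) (\<lambda>\<omega>. excess (X \<omega>)) = excess (X \<omega>)"
    using U by (auto simp: uniform_transform_def)
  have "AE \<omega> in restrX M X. 0 < U \<omega> \<and> U \<omega> < 1"
    by (rule R.AE_in_unit_if_uniform[OF _ distr_U]) measurable
  with VaR_U have "AE \<omega> in M. 0 < U \<omega> \<and> U \<omega> < 1 \<and> VaR M (U \<omega>) (\<lambda>\<omega>. excess (X \<omega>)) = excess (X \<omega>)"
    by (intro AE_restrX_imp, eventually_elim) (simp add: VaR_restrX)
  with A_U show ?thesis
  proof eventually_elim
    case (elim \<omega>)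
    have Z: "(\<lambda>\<omega>. excess (X \<omega>)) \<in> borel_measurable M" by measurable
    show ?case
    proof (cases "p < U \<omega>")
      case True
      then show ?thesis using VaR_mono[OF Z p(1), of "U \<omega>"] elim by auto
    next
      case False
      then show ?thesis using VaR_mono[OF Z _ _ p(2), of "U \<omega>"] elim by auto
    qed
  qed
qed

lemma uniform_transform_if_between_quantile:
  assumes A: "A \<in> sets (sigmaX M X)" "prob A = 1 - p"
    and above: "AE \<omega> in M. VaR M p (\<lambda>\<omega>. excess (X \<omega>)) < excess (X \<omega>) \<longrightarrow> \<omega> \<in> A"
    and below: "AE \<omega> in M. \<omega> \<in> A \<longrightarrow> VaR M p (\<lambda>\<omega>. excess (X \<omega>)) \<le> excess (X \<omega>)"
  shows "\<exists>U. uniform_transform (restrX M X) (\<lambda>\<omega>. excess (X \<omega>)) U \<and> (AE \<omega> in M. \<omega> \<in> A \<longleftrightarrow> p < U \<omega>)"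
proof -
  interpret R: prob_space "restrX M X" by (rule prob_space_restrX)
  obtain S where [measurable]: "S \<in> sets borel" and A_eq: "A = X -` S \<inter> space M"
    using A(1) sets_sigmaX by auto
  have A_restrX[measurable]: "A \<in> sets (restrX M X)" using A(1) by (simp add: sets_restrX)
  \<comment> \<open>K ranks A above its complement and is injective in X, hence has no atoms.\<close>
  define K where "K \<omega> = (if X \<omega> \<in> S then pi else 0) + arctan (X \<omega>)" for \<omega>
  have [measurable]: "K \<in> borel_measurable (restrX M X)" unfolding K_def by measurable
  have K_atomless: "measure (restrX M X) {\<omega>\<in>space (restrX M X). K \<omega> = k} = 0" for k
  proof -
    have "{\<omega>\<in>space (restrX M X). K \<omega> = k} \<in> sets (restrX M X)" by measurable
    then have "measure (restrX M X) {\<omega>\<in>space (restrX M X). K \<omega> = k}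
        = prob {\<omega>\<in>space M. K \<omega> = k}"
      by (simp add: measure_restrX sets_restrX)
    also have "\<dots> \<le> prob ({\<omega>\<in>space M. X \<omega> = tan k} \<union> {\<omega>\<in>space M. X \<omega> = tan (k - pi)})"
      by (intro finite_measure_mono) (auto simp: K_def tan_arctan split: if_splits)
    also have "\<dots> \<le> prob {\<omega>\<in>space M. X \<omega> = tan k} + prob {\<omega>\<in>space M. X \<omega> = tan (k - pi)}"
      by (rule measure_Un_le) auto
    finally show ?thesis using X_atomless measure_nonneg[of "restrX M X"] by (simp add: order.antisym)
  qed
  have A_K: "\<omega> \<in> A \<longleftrightarrow> pi / 2 < K \<omega>" if "\<omega> \<in> space (restrX M X)" for \<omega>
    using that arctan_lbound[of "X \<omega>"] arctan_ubound[of "X \<omega>"] by (auto simp: A_eq K_def)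
  define U where "U = lex_rank (restrX M X) (\<lambda>\<omega>. excess (X \<omega>)) K"
  have "uniform_transform (restrX M X) (\<lambda>\<omega>. excess (X \<omega>)) U"
    unfolding U_def by (rule R.uniform_transform_lex_rank[OF _ _ K_atomless]) measurable
  moreover have "AE \<omega> in restrX M X. \<omega> \<in> A \<longleftrightarrow> p < U \<omega>"
    unfolding U_def
  proof (rule R.AE_mem_iff_lex_rank_greater[OF _ _ K_atomless p A_restrX _ _ _ A_K])
    show "measure (restrX M X) A = 1 - p" using A by (simp add: measure_restrX)
    show "AE \<omega> in restrX M X. VaR (restrX M X) p (\<lambda>\<omega>. excess (X \<omega>)) < excess (X \<omega>) \<longrightarrow> \<omega> \<in> A"
      using above by (intro AE_restrX) (simp_all add: VaR_restrX)
    show "AE \<omega> in restrX M X. \<omega> \<in> A \<longrightarrow> VaR (restrX M X) p (\<lambda>\<omega>. excess (X \<omega>)) \<le> excess (X \<omega>)"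
      using below by (intro AE_restrX) (simp_all add: VaR_restrX)
  qed measurable
  ultimately show ?thesis by (blast dest: AE_restrX_imp)
qed

lemma optimal_iff_uniform_transform:
  assumes A: "A \<in> sets (sigmaX M X)" "prob A = 1 - p"
  shows "optimal A \<longleftrightarrow>
    (\<exists>U. uniform_transform (restrX M X) (\<lambda>\<omega>. excess (X \<omega>)) U \<and> (AE \<omega> in M. \<omega> \<in> A \<longleftrightarrow> p < U \<omega>))"
proof
  assume "optimal A"
  then show "\<exists>U. uniform_transform (restrX M X) (\<lambda>\<omega>. excess (X \<omega>)) U \<and> (AE \<omega> in M. \<omega> \<in> A \<longleftrightarrow> p < U \<omega>)"
    using uniform_transform_if_between_quantile[OF A] AE_above_quantile_if_optimal[OF A]
      AE_below_quantile_if_optimal[OF A] by blast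
next
  assume "\<exists>U. uniform_transform (restrX M X) (\<lambda>\<omega>. excess (X \<omega>)) U \<and> (AE \<omega> in M. \<omega> \<in> A \<longleftrightarrow> p < U \<omega>)"
  then have "AE \<omega> in M. (VaR M p (\<lambda>\<omega>. excess (X \<omega>)) < excess (X \<omega>) \<longrightarrow> \<omega> \<in> A)
      \<and> (\<omega> \<in> A \<longrightarrow> VaR M p (\<lambda>\<omega>. excess (X \<omega>)) \<le> excess (X \<omega>))"
    using AE_between_quantile_if_uniform_transform by blast
  then show "optimal A"
    by (intro optimal_if_between_quantile[OF A]) (auto elim: eventually_mono)
qed

end

locale VaR_minimizer = VaR_minimization +
  fixes gX :: "real \<Rightarrow> real"
  assumes gX_in_Gns: "gX \<in> Gns M X \<gamma> x0" and VaR_gX: "VaR M p (\<lambda>\<omega>. gX (X \<omega>)) = q"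
begin

lemma gX_measurable[measurable]: "gX \<in> borel_measurable borel"
  using gX_in_Gns by (simp add: Gns_def)

lemma gX_bounds: "AE \<omega> in M. 0 \<le> gX (X \<omega>) \<and> gX (X \<omega>) \<le> X \<omega>"
  using gX_in_Gns by (simp add: Gns_def)

lemma expectation_gX: "integral\<^sup>L M (\<lambda>\<omega>. \<gamma> (X \<omega>) * gX (X \<omega>)) = x0"
  using expectation_le_x0_if_VaR_le_q[OF _ gX_bounds] VaR_gX gX_in_Gns
  by (auto simp: Gns_def intro: antisym)

lemma exists_truncation_above_gX:
  obtains A where "A \<in> sets (sigmaX M X)" "prob A = 1 - p"
    "AE \<omega> in M. gX (X \<omega>) \<le> (if \<omega> \<in> A then X \<omega> else min (X \<omega>) q)"
proof -
  define B where "B = {\<omega>\<in>space M. gX (X \<omega>) \<le> q}"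
  have B: "B \<in> sets (sigmaX M X)" unfolding B_def by (rule pred_X_in_sigmaX) measurable
  have [measurable]: "B \<in> events" using B sigmaX_subset_events by blast
  have "p \<le> prob B"
    using prob_le_VaR[OF _ p, of "\<lambda>\<omega>. gX (X \<omega>)"] VaR_gX by (simp add: B_def)
  then obtain C where C: "C \<in> sets (sigmaX M X)" "C \<subseteq> B" "prob C = prob B - p"
    using exists_sigmaX_subset_prob_eq[OF X_atomless B, of "prob B - p"] p by auto
  have [measurable]: "C \<in> events" using C sigmaX_subset_events by blast
  show ?thesis
  proof
    show "(space M - B) \<union> C \<in> sets (sigmaX M X)"
      using B C(1) sets.compl_sets[of B "sigmaX M X"] by simp
    have "prob ((space M - B) \<union> C) = prob (space M - B) + prob C"
      using C(2) by (intro finite_measure_Union) auto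
    then show "prob ((space M - B) \<union> C) = 1 - p" using C(3) by (simp add: prob_compl)
    show "AE \<omega> in M. gX (X \<omega>) \<le> (if \<omega> \<in> (space M - B) \<union> C then X \<omega> else min (X \<omega>) q)"
      using gX_bounds AE_space by eventually_elim (auto simp: B_def)
  qed
qed

lemma AE_gX_eq_truncation:
  obtains A where "A \<in> sets (sigmaX M X)" "prob A = 1 - p"
    "AE \<omega> in M. gX (X \<omega>) = (if \<omega> \<in> A then X \<omega> else min (X \<omega>) q)"
proof -
  obtain A where A: "A \<in> sets (sigmaX M X)" "prob A = 1 - p"
    and le: "AE \<omega> in M. gX (X \<omega>) \<le> (if \<omega> \<in> A then X \<omega> else min (X \<omega>) q)"
    by (rule exists_truncation_above_gX)
  have [measurable]: "A \<in> events" using A sigmaX_subset_events by blast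
  have "AE \<omega> in M. \<gamma> (X \<omega>) * gX (X \<omega>) = \<gamma> (X \<omega>) * (if \<omega> \<in> A then X \<omega> else min (X \<omega>) q)"
    using integrable_truncated[of A] integrable_\<gamma>_mult[OF _ gX_bounds] objA_le_x0[OF A] expectation_gX le
    by (intro AE_eq_if_AE_le_integral_le)
      (auto simp: objA_def elim!: eventually_mono intro!: mult_left_mono less_imp_le[OF \<gamma>_pos])
  then have "AE \<omega> in M. gX (X \<omega>) = (if \<omega> \<in> A then X \<omega> else min (X \<omega>) q)"
    by eventually_elim (simp add: less_imp_neq[OF \<gamma>_pos, THEN not_sym] del: if_distrib)
  with A show ?thesis by (rule that)
qed

lemma optimal_if_gX_eq_truncation:
  assumes A: "A \<in> sets (sigmaX M X)"
    and gX_A: "AE \<omega> in M. gX (X \<omega>) = (if \<omega> \<in> A then X \<omega> else min (X \<omega>) q)"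
  shows "optimal A"
proof (intro ballI impI)
  fix B assume "B \<in> sets (sigmaX M X)" "prob B = 1 - p"
  then have "objA M X \<gamma> q B \<le> x0" by (rule objA_le_x0)
  also have "x0 = objA M X \<gamma> q A"
  proof -
    have [measurable]: "A \<in> events" using A sigmaX_subset_events by blast
    have ae: "AE \<omega> in M. \<gamma> (X \<omega>) * gX (X \<omega>) = \<gamma> (X \<omega>) * (if \<omega> \<in> A then X \<omega> else min (X \<omega>) q)"
      using gX_A by eventually_elim simp
    show ?thesis
      unfolding expectation_gX[symmetric] objA_def by (intro integral_cong_AE[OF _ _ ae]; measurable)
  qed
  finally show "objA M X \<gamma> q B \<le> objA M X \<gamma> q A" .
qed

end

theorem lemma2:
  fixes M :: "'a measure" and X :: "'a \<Rightarrow> real" and \<gamma> :: "real \<Rightarrow> real"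
    and p x0 q :: real and gX :: "real \<Rightarrow> real"
  assumes P: "prob_space M" and atl: "atomless M"
    and p: "0 < p" "p < 1"
    and Xm: "X \<in> borel_measurable M"
    and Xnn: "\<forall>\<omega>\<in>space M. 0 \<le> X \<omega>"
    and dens: "\<exists>f. distributed M lborel X (\<lambda>x. ennreal (f x)) \<and> (\<forall>x. 0 \<le> f x)
                   \<and> (\<forall>x\<in>dist_support M X. 0 < f x)"
    and gcont: "continuous_on UNIV \<gamma>" and gpos: "\<forall>x. 0 < \<gamma> x"
    and gint: "integrable M (\<lambda>\<omega>. \<gamma> (X \<omega>))"
    and gE: "integral\<^sup>L M (\<lambda>\<omega>. \<gamma> (X \<omega>)) = 1"
    and gXint: "integrable M (\<lambda>\<omega>. \<gamma> (X \<omega>) * X \<omega>)"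
    and x0: "0 \<le> x0" "x0 < integral\<^sup>L M (\<lambda>\<omega>. \<gamma> (X \<omega>) * X \<omega>)"
    and q_def: "q = Inf ((\<lambda>g. VaR M p (\<lambda>\<omega>. g (X \<omega>))) ` Gns M X \<gamma> x0)"
    and gXsol: "gX \<in> Gns M X \<gamma> x0" "VaR M p (\<lambda>\<omega>. gX (X \<omega>)) = q"
    and qpos: "q > 0"
  shows
    "integral\<^sup>L M (\<lambda>\<omega>. \<gamma> (X \<omega>) * gX (X \<omega>)) = x0
     \<and> (\<forall>g A. g \<in> Gns M X \<gamma> x0 \<longrightarrow> A \<in> sets M \<longrightarrow> measure M A = 1 - p \<longrightarrow>
        (AE \<omega> in M. g (X \<omega>) = (if \<omega> \<in> A then X \<omega> else min (X \<omega>) q)) \<longrightarrow>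
        VaR M p (\<lambda>\<omega>. g (X \<omega>)) = q)
     \<and> (\<exists>A\<in>sets (sigmaX M X). measure M A = 1 - p \<and>
        (AE \<omega> in M. gX (X \<omega>) = (if \<omega> \<in> A then X \<omega> else min (X \<omega>) q)))
     \<and> (\<forall>A. A \<in> sets (sigmaX M X) \<longrightarrow> measure M A = 1 - p \<longrightarrow>
        ((\<forall>B\<in>sets (sigmaX M X). measure M B = 1 - p \<longrightarrow> objA M X \<gamma> q B \<le> objA M X \<gamma> q A)
         \<longleftrightarrow> (\<exists>U. uniform_transform (restrX M X) (\<lambda>\<omega>. (X \<omega> - q) * \<gamma> (X \<omega>)) U \<and>
                  (AE \<omega> in M. (\<omega> \<in> A \<longleftrightarrow> p < U \<omega>)))))
     \<and> (\<exists>U. uniform_transform (restrX M X) (\<lambda>\<omega>. (X \<omega> - q) * \<gamma> (X \<omega>)) U \<and>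
        (AE \<omega> in M. gX (X \<omega>) = (if p < U \<omega> then X \<omega> else min (X \<omega>) q)))"
proof -
  interpret prob_space M by (rule P)
  obtain f where "distributed M lborel X (\<lambda>x. ennreal (f x))" using dens by blast
  then have X_atomless: "prob {\<omega>\<in>space M. X \<omega> = x} = 0" for x
    by (rule measure_point_eq_0_if_distributed)
  interpret VaR_minimizer M X \<gamma> p x0 q gX
    by unfold_locales (use p Xm Xnn X_atomless gcont gpos gint gE gXint x0 q_def gXsol qpos in auto)
  have Z: "(\<lambda>\<omega>. (X \<omega> - q) * \<gamma> (X \<omega>)) = (\<lambda>\<omega>. excess (X \<omega>))" by (simp add: excess_def)
  obtain A where A: "A \<in> sets (sigmaX M X)" "prob A = 1 - p"
    and gX_A: "AE \<omega> in M. gX (X \<omega>) = (if \<omega> \<in> A then X \<omega> else min (X \<omega>) q)"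
    by (rule AE_gX_eq_truncation)
  obtain U where U: "uniform_transform (restrX M X) (\<lambda>\<omega>. excess (X \<omega>)) U"
    and A_U: "AE \<omega> in M. \<omega> \<in> A \<longleftrightarrow> p < U \<omega>"
    using optimal_iff_uniform_transform[OF A] optimal_if_gX_eq_truncation[OF A(1) gX_A] by blast
  have "AE \<omega> in M. gX (X \<omega>) = (if p < U \<omega> then X \<omega> else min (X \<omega>) q)"
    using gX_A A_U by eventually_elim simp
  then show ?thesis
    unfolding Z using expectation_gX VaR_eq_q_if_truncated optimal_iff_uniform_transform A gX_A U
    by (auto simp: Gns_def)
qed

end
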